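(* Let $M\in\mathbf{F}_q[t]$ have degree $d\ge1$, $\chi$ a non-trivial Dirichlet character mod $M$ and $k\ge2$. Then for $n\ge2$, $$\sum_{n_1+n_2=n}Z_{k-1}(n_1,\chi)Z_1(n_2,\chi)=\frac{(-1)^kk}{(k-1)!}\Bigg\{\sum_{j=1}^{d_\chi}m_j(\chi)^k\frac{\alpha_j(\chi)^n(\log n)^{k-1}}n+O\Big(d^k\Big(k+\frac1{\gamma(\chi)}\Big)\frac{q^{n/2}(\log n)^{k-2}}n\Big)\Bigg\},$$ with an absolute implied constant.
   Context: For $\chi\ne\chi_0$ mod $M$, $\mathcal{L}(u,\chi)$ (with $\mathcal{L}(q^{-s},\chi)=\sum_{a\text{ monic}}\chi(a)q^{-s\deg a}$) is a polynomial of degree $\le d-1$; let $\alpha_j(\chi)=\sqrt qe^{i\gamma_j(\chi)}$, $\gamma_j(\chi)\in(-\pi,\pi)\setminus\{0\}$, $1\le j\le d_\chi$, be its distinct non-real inverse zeros of absolute value $\sqrt q$, with multiplicities $m_j(\chi)$. $\gamma(\chi)=\min_{1\le i\ne j\le d_\chi}\{|\gamma_i(\chi)-\gamma_j(\chi)|,|\gamma_i(\chi)|,|\pi-\gamma_i(\chi)|\}$. For $\ell\ge1$, $Z_\ell(n,\chi)=\frac{(-1)^\ell}{(\ell-1)!}\sum_{j=1}^{d_\chi}m_j(\chi)^\ell\frac{\alpha_j(\chi)^n(\log n)^{\ell-1}}n$. *)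

theory Defs
  imports "HOL-Complex_Analysis.Complex_Analysis" "HOL-Algebra.Polynomial_Divisibility"
begin

text \<open>The base field F_q is a finite field R in the sense of HOL-Algebra; polynomials
  over it are the elements of poly_ring R (normalised coefficient lists, highest
  coefficient first).\<close>

definition fq_card :: "'a ring \<Rightarrow> nat" where
  "fq_card R = card (carrier R)"

definition monic_polys :: "'a ring \<Rightarrow> nat \<Rightarrow> 'a list set" where
  "monic_polys R n = {p \<in> carrier (poly_ring R). p \<noteq> [] \<and> lead_coeff p = \<one>\<^bsub>R\<^esub> \<and> degree p = n}"

definition pcoprime :: "'a ring \<Rightarrow> 'a list \<Rightarrow> 'a list \<Rightarrow> bool" where
  "pcoprime R a b \<longleftrightarrow> (\<forall>c \<in> carrier (poly_ring R).
      c pdivides\<^bsub>R\<^esub> a \<and> c pdivides\<^bsub>R\<^esub> b \<longrightarrow> c \<in> Units (poly_ring R))"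

definition dirichlet_char :: "'a ring \<Rightarrow> 'a list \<Rightarrow> ('a list \<Rightarrow> complex) \<Rightarrow> bool" where
  "dirichlet_char R M chi \<longleftrightarrow>
     (\<forall>a \<in> carrier (poly_ring R). \<forall>b \<in> carrier (poly_ring R).
        chi (mult (poly_ring R) a b) = chi a * chi b) \<and>
     (\<forall>a \<in> carrier (poly_ring R). \<forall>b \<in> carrier (poly_ring R).
        M pdivides\<^bsub>R\<^esub> (a_minus (poly_ring R) a b) \<longrightarrow> chi a = chi b) \<and>
     (\<forall>a \<in> carrier (poly_ring R). chi a \<noteq> 0 \<longleftrightarrow> pcoprime R a M)"

definition nontrivial_char :: "'a ring \<Rightarrow> 'a list \<Rightarrow> ('a list \<Rightarrow> complex) \<Rightarrow> bool" where
  "nontrivial_char R M chi \<longleftrightarrow> (\<exists>a \<in> carrier (poly_ring R). pcoprime R a M \<and> chi a \<noteq> 1)"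

definition L_coeff :: "'a ring \<Rightarrow> ('a list \<Rightarrow> complex) \<Rightarrow> nat \<Rightarrow> complex" where
  "L_coeff R chi n = (\<Sum>a \<in> monic_polys R n. chi a)"

definition Lfun :: "'a ring \<Rightarrow> ('a list \<Rightarrow> complex) \<Rightarrow> complex \<Rightarrow> complex" where
  "Lfun R chi u = (\<Sum>n. L_coeff R chi n * u ^ n)"

definition inv_zeros :: "'a ring \<Rightarrow> ('a list \<Rightarrow> complex) \<Rightarrow> complex set" where
  "inv_zeros R chi = {\<alpha>. Im \<alpha> \<noteq> 0 \<and> cmod \<alpha> = sqrt (real (fq_card R)) \<and> Lfun R chi (1 / \<alpha>) = 0}"

definition zmult :: "'a ring \<Rightarrow> ('a list \<Rightarrow> complex) \<Rightarrow> complex \<Rightarrow> nat" where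
  "zmult R chi \<alpha> = nat (zorder (Lfun R chi) (1 / \<alpha>))"

text \<open>gamma(chi); gamma_j(chi) = Arg alpha_j. Convention: value 1 if there are no such zeros
  (then both sides of the lemma vanish, so the convention is immaterial).\<close>
definition gamma_chi :: "'a ring \<Rightarrow> ('a list \<Rightarrow> complex) \<Rightarrow> real" where
  "gamma_chi R chi =
     (let Z = inv_zeros R chi;
          S = {\<bar>Arg a - Arg b\<bar> | a b. a \<in> Z \<and> b \<in> Z \<and> a \<noteq> b}
              \<union> {\<bar>Arg a\<bar> | a. a \<in> Z} \<union> {\<bar>pi - Arg a\<bar> | a. a \<in> Z}
      in if S = {} then 1 else Min S)"

definition Zfun :: "'a ring \<Rightarrow> ('a list \<Rightarrow> complex) \<Rightarrow> nat \<Rightarrow> nat \<Rightarrow> complex" where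
  "Zfun R chi l n = (-1) ^ l / of_nat (fact (l - 1)) *
     (\<Sum>\<alpha> \<in> inv_zeros R chi. of_nat (zmult R chi \<alpha>) ^ l * \<alpha> ^ n *
        of_real (ln (real n)) ^ (l - 1) / of_nat n)"

end

theory Submission
  imports Defs "HOL-Computational_Algebra.Polynomial"
begin

text \<open>Write L = ln n and w(i) = (ln i)^j / (i (n - i)), where k = j + 2. Multiplying out the
  two sums over inverse zeros turns the convolution into a double sum, over pairs of inverse
  zeros a, b, of the kernels K(a, b) = \<Sum>_i a^i b^(n-i) w(i). On the diagonal K(a, a) = a^n \<Sum>_i w(i),
  and comparing sums with integrals gives \<Sum>_i w(i) = (1/(j+1) + 1) L^(j+1)/n + O((j+2) L^j/n): this
  is the main term. Off the diagonal a/b lies on the unit circle at distance at least gamma/4 from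
  1, so the partial sums of its powers are O(1/gamma), and Abel summation against the monotone
  pieces of w bounds K(a, b) by O(q^(n/2) L^j/(gamma n)). The sums over zeros cost a factor d^k
  because L(u, chi) is a polynomial of degree less than d with constant term 1, so the
  multiplicities of its zeros add up to at most d.\<close>

section \<open>Logarithmic sums\<close>

lemma power_diff_bounds:
  fixes a b :: real
  assumes "0 \<le> b" "b \<le> a"
  shows "real (Suc j) * b ^ j * (a - b) \<le> a ^ Suc j - b ^ Suc j \<and>
         a ^ Suc j - b ^ Suc j \<le> real (Suc j) * a ^ j * (a - b)"
proof (induction j)
  case 0 then show ?case by simp
next
  case (Suc j)
  have e: "a ^ Suc (Suc j) - b ^ Suc (Suc j) = a * (a ^ Suc j - b ^ Suc j) + b ^ Suc j * (a - b)"
    by (simp add: algebra_simps)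
  have bj: "b ^ Suc j \<le> a ^ Suc j" using power_mono[OF assms(2) assms(1)] .
  have ab: "0 \<le> a - b" using assms by simp
  have l: "b * (real (Suc j) * b ^ j * (a - b)) \<le> a * (a ^ Suc j - b ^ Suc j)"
    using Suc.IH assms ab by (intro mult_mono) auto
  have u: "a * (a ^ Suc j - b ^ Suc j) \<le> a * (real (Suc j) * a ^ j * (a - b))"
    using Suc.IH assms by (intro mult_left_mono) auto
  have u2: "b ^ Suc j * (a - b) \<le> a ^ Suc j * (a - b)" using bj ab by (rule mult_right_mono)
  show ?case
  proof
    show "real (Suc (Suc j)) * b ^ Suc j * (a - b) \<le> a ^ Suc (Suc j) - b ^ Suc (Suc j)"
      unfolding e using l by (simp add: algebra_simps)
    show "a ^ Suc (Suc j) - b ^ Suc (Suc j) \<le> real (Suc (Suc j)) * a ^ Suc j * (a - b)"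
      unfolding e using u u2 by (simp add: algebra_simps)
  qed
qed

lemma ln_Suc_diff_bounds:
  assumes "m \<ge> (1::nat)"
  shows "1 / real (Suc m) \<le> ln (real (Suc m)) - ln (real m)"
    and "ln (real (Suc m)) - ln (real m) \<le> 1 / real m"
proof -
  have m0: "real m > 0" using assms by simp
  have "ln (real m / real (Suc m)) \<le> real m / real (Suc m) - 1"
    using m0 by (intro ln_le_minus_one) simp
  moreover have "ln (real m / real (Suc m)) = ln (real m) - ln (real (Suc m))"
    using m0 by (simp add: ln_div)
  moreover have "real m / real (Suc m) - 1 = - (1 / real (Suc m))"
    by (simp add: field_simps)
  ultimately show "1 / real (Suc m) \<le> ln (real (Suc m)) - ln (real m)" by linarith
  have "ln (real (Suc m) / real m) \<le> real (Suc m) / real m - 1"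
    using m0 by (intro ln_le_minus_one) simp
  moreover have "ln (real (Suc m) / real m) = ln (real (Suc m)) - ln (real m)"
    using m0 by (simp add: ln_div)
  moreover have "real (Suc m) / real m - 1 = 1 / real m"
    using m0 by (simp add: field_simps)
  ultimately show "ln (real (Suc m)) - ln (real m) \<le> 1 / real m" by linarith
qed

lemma ln_power_increment_bounds:
  assumes m: "1 \<le> m"
  shows "ln (real m) ^ j / real (Suc m)
           \<le> (ln (real (Suc m)) ^ Suc j - ln (real m) ^ Suc j) / real (Suc j)"
    and "(ln (real (Suc m)) ^ Suc j - ln (real m) ^ Suc j) / real (Suc j)
           \<le> ln (real (Suc m)) ^ j / real m"
proof -
  define u where "u = ln (real m)"
  define v where "v = ln (real (Suc m))"
  have u0: "0 \<le> u" and uv: "u \<le> v" using m by (simp_all add: u_def v_def)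
  have step: "1 / real (Suc m) \<le> v - u" "v - u \<le> 1 / real m"
    using ln_Suc_diff_bounds[OF m] by (simp_all add: u_def v_def)
  note pd = power_diff_bounds[OF u0 uv, of j]
  have "u ^ j / real (Suc m) \<le> u ^ j * (v - u)"
    using mult_left_mono[OF step(1), of "u ^ j"] u0 by simp
  also have "\<dots> \<le> (v ^ Suc j - u ^ Suc j) / real (Suc j)"
    using pd by (simp add: field_simps)
  finally show "u ^ j / real (Suc m) \<le> (v ^ Suc j - u ^ Suc j) / real (Suc j)" .
  have "(v ^ Suc j - u ^ Suc j) / real (Suc j) \<le> v ^ j * (v - u)"
    using pd by (simp add: field_simps)
  also have "\<dots> \<le> v ^ j / real m"
    using mult_left_mono[OF step(2), of "v ^ j"] u0 uv by simp
  finally show "(v ^ Suc j - u ^ Suc j) / real (Suc j) \<le> v ^ j / real m" .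
qed

lemma sum_inverse_diff_le_1:
  "(\<Sum>m=1..<n. 1 / real m - 1 / real (Suc m)) \<le> 1"
proof (cases "n = 0")
  case False
  then have "(\<Sum>m=1..<n. 1 / real m - 1 / real (Suc m)) = 1 - 1 / real n"
    using sum_Suc_diff'[of 1 n "\<lambda>i. - 1 / real i"] by simp
  then show ?thesis by simp
qed simp

lemma sum_ln_power_div_le:
  assumes n: "1 \<le> n"
  shows "(\<Sum>m=1..<n. ln (real m) ^ j / real m) \<le> ln (real n) ^ Suc j / real (Suc j) + ln (real n) ^ j"
proof -
  define L where "L = ln (real n)"
  define g where "g m = 1 / real m - 1 / real (Suc m)" for m :: nat
  have "(\<Sum>m=1..<n. ln (real m) ^ j / real m - L ^ j * g m)
          \<le> (\<Sum>m=1..<n. (ln (real (Suc m)) ^ Suc j - ln (real m) ^ Suc j) / real (Suc j))"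
  proof (rule sum_mono)
    fix m assume m: "m \<in> {1..<n}"
    have "ln (real m) ^ j / real m - L ^ j * g m \<le> ln (real m) ^ j / real m - ln (real m) ^ j * g m"
      using m by (intro diff_left_mono mult_right_mono power_mono) (auto simp: L_def g_def field_simps)
    also have "\<dots> = ln (real m) ^ j / real (Suc m)"
      by (simp add: g_def right_diff_distrib)
    finally show "ln (real m) ^ j / real m - L ^ j * g m
                    \<le> (ln (real (Suc m)) ^ Suc j - ln (real m) ^ Suc j) / real (Suc j)"
      using ln_power_increment_bounds(1)[of m j] m by simp
  qed
  also have "\<dots> = L ^ Suc j / real (Suc j)"
    using sum_Suc_diff'[OF n, of "\<lambda>m. ln (real m) ^ Suc j / real (Suc j)"]
    by (simp add: L_def diff_divide_distrib)
  finally have "(\<Sum>m=1..<n. ln (real m) ^ j / real m) - L ^ j * (\<Sum>m=1..<n. g m) \<le> L ^ Suc j / real (Suc j)"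
    by (simp add: sum_subtractf sum_distrib_left)
  moreover have "L ^ j * (\<Sum>m=1..<n. g m) \<le> L ^ j"
    using sum_inverse_diff_le_1[of n] n by (simp add: g_def L_def mult_left_le)
  ultimately show ?thesis unfolding L_def by linarith
qed

lemma sum_ln_power_div_ge:
  assumes n: "1 \<le> n"
  shows "ln (real n) ^ Suc j / real (Suc j) \<le> (\<Sum>m=1..<n. ln (real m) ^ j / real m) + 2 * ln (real n) ^ j"
proof -
  define L where "L = ln (real n)"
  define f where "f m = ln (real m) ^ j / real m" for m :: nat
  define g where "g m = 1 / real m - 1 / real (Suc m)" for m :: nat
  have "L ^ Suc j / real (Suc j)
          = (\<Sum>m=1..<n. (ln (real (Suc m)) ^ Suc j - ln (real m) ^ Suc j) / real (Suc j))"
    using sum_Suc_diff'[OF n, of "\<lambda>m. ln (real m) ^ Suc j / real (Suc j)"]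
    by (simp add: L_def diff_divide_distrib)
  also have "\<dots> \<le> (\<Sum>m=1..<n. f (Suc m) + L ^ j * g m)"
  proof (rule sum_mono)
    fix m assume m: "m \<in> {1..<n}"
    have "ln (real (Suc m)) ^ j / real m = f (Suc m) + ln (real (Suc m)) ^ j * g m"
      by (simp add: f_def g_def right_diff_distrib)
    also have "\<dots> \<le> f (Suc m) + L ^ j * g m"
      using m by (intro add_left_mono mult_right_mono power_mono) (auto simp: L_def g_def field_simps)
    finally show "(ln (real (Suc m)) ^ Suc j - ln (real m) ^ Suc j) / real (Suc j) \<le> f (Suc m) + L ^ j * g m"
      using ln_power_increment_bounds(2)[of m j] m by simp
  qed
  also have "\<dots> = (\<Sum>m=1..<n. f m) + f n - f 1 + L ^ j * (\<Sum>m=1..<n. g m)"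
    using sum_Suc_diff'[OF n, of f] by (simp add: sum.distrib sum_distrib_left sum_subtractf)
  also have "\<dots> \<le> (\<Sum>m=1..<n. f m) + 2 * L ^ j"
  proof -
    have "0 \<le> f 1" by (simp add: f_def)
    moreover have "f n \<le> L ^ j"
      using n by (simp add: f_def L_def divide_le_eq mult_le_cancel_left1)
    moreover have "L ^ j * (\<Sum>m=1..<n. g m) \<le> L ^ j"
      using sum_inverse_diff_le_1[of n] n by (simp add: g_def L_def mult_left_le)
    ultimately show ?thesis by linarith
  qed
  finally show ?thesis by (simp add: f_def L_def)
qed

lemma sum_ln_power_div_approx:
  assumes "1 \<le> n"
  shows "\<bar>(\<Sum>m=1..<n. ln (real m) ^ j / real m) - ln (real n) ^ Suc j / real (Suc j)\<bar>
           \<le> 2 * ln (real n) ^ j"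
  using sum_ln_power_div_le[OF assms, of j] sum_ln_power_div_ge[OF assms, of j] assms
  by (simp add: abs_le_iff)

lemma sum_inverse_reflect:
  "(\<Sum>m=1..<n. 1 / (real n - real m)) = (\<Sum>m=1..<n. 1 / real m)"
proof -
  have "(\<Sum>m=1..<n. 1 / (real n - real m))
          = (\<Sum>m=1..<n. (\<lambda>i. 1 / (real n - real i)) (n + 1 - Suc m))"
    by (rule sum.atLeastLessThan_rev)
  also have "\<dots> = (\<Sum>m=1..<n. 1 / real m)"
    by (intro sum.cong) (auto simp: of_nat_diff)
  finally show ?thesis .
qed

lemma ln_power_diff_le:
  assumes m: "1 \<le> m" "m \<le> n"
  shows "ln (real n) ^ Suc i - ln (real m) ^ Suc i
           \<le> real (Suc i) * ln (real n) ^ i * ((real n - real m) / real m)"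
proof -
  have "ln (real n) - ln (real m) = ln (real n / real m)"
    using m by (simp add: ln_div)
  also have "\<dots> \<le> real n / real m - 1"
    using m by (intro ln_le_minus_one) simp
  also have "\<dots> = (real n - real m) / real m"
    using m by (simp add: field_simps)
  finally have gap: "ln (real n) - ln (real m) \<le> (real n - real m) / real m" .
  have "ln (real n) ^ Suc i - ln (real m) ^ Suc i
          \<le> real (Suc i) * ln (real n) ^ i * (ln (real n) - ln (real m))"
    using power_diff_bounds[of "ln (real m)" "ln (real n)" i] m by simp
  also have "\<dots> \<le> real (Suc i) * ln (real n) ^ i * ((real n - real m) / real m)"
    using gap m by (intro mult_left_mono) simp_all
  finally show ?thesis .
qed

lemma sum_ln_power_gap_div_bounds:
  shows "0 \<le> (\<Sum>m=1..<n. (ln (real n) ^ j - ln (real m) ^ j) / (real n - real m))"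
    and "(\<Sum>m=1..<n. (ln (real n) ^ j - ln (real m) ^ j) / (real n - real m))
           \<le> real j * ln (real n) ^ (j - 1) * (\<Sum>m=1..<n. 1 / real m)"
proof -
  have term_bounds: "0 \<le> (ln (real n) ^ j - ln (real m) ^ j) / (real n - real m)
        \<and> (ln (real n) ^ j - ln (real m) ^ j) / (real n - real m)
             \<le> real j * ln (real n) ^ (j - 1) * (1 / real m)"
    if m: "m \<in> {1..<n}" for m
  proof -
    have "ln (real n) ^ j - ln (real m) ^ j \<le> real j * ln (real n) ^ (j - 1) * ((real n - real m) / real m)"
      using ln_power_diff_le[of m n "j - 1"] m by (cases j) simp_all
    moreover have "ln (real m) ^ j \<le> ln (real n) ^ j"
      using m by (intro power_mono) simp_all
    ultimately show ?thesis
      using m by (simp add: divide_le_eq field_simps)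
  qed
  then show "0 \<le> (\<Sum>m=1..<n. (ln (real n) ^ j - ln (real m) ^ j) / (real n - real m))"
    by (intro sum_nonneg) blast
  have "(\<Sum>m=1..<n. (ln (real n) ^ j - ln (real m) ^ j) / (real n - real m))
          \<le> (\<Sum>m=1..<n. real j * ln (real n) ^ (j - 1) * (1 / real m))"
    using term_bounds by (intro sum_mono) blast
  then show "(\<Sum>m=1..<n. (ln (real n) ^ j - ln (real m) ^ j) / (real n - real m))
           \<le> real j * ln (real n) ^ (j - 1) * (\<Sum>m=1..<n. 1 / real m)"
    by (simp add: sum_distrib_left)
qed

lemma sum_ln_power_div_complement_approx:
  assumes n: "2 \<le> n"
  shows "\<bar>(\<Sum>m=1..<n. ln (real m) ^ j / (real n - real m)) - ln (real n) ^ Suc j\<bar>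
           \<le> 5 * real (Suc j) * ln (real n) ^ j"
proof -
  define L where "L = ln (real n)"
  define H where "H = (\<Sum>m=1..<n. 1 / real m)"
  define gap where "gap = (\<Sum>m=1..<n. (L ^ j - ln (real m) ^ j) / (real n - real m))"
  have "ln 2 \<le> L" using n by (simp add: L_def)
  then have L_half: "1 / 2 \<le> L" using ln2_ge_two_thirds by linarith
  have H_approx: "\<bar>H - L\<bar> \<le> 2"
    using sum_ln_power_div_approx[of n 0] n by (simp add: H_def L_def)
  have "(\<Sum>m=1..<n. ln (real m) ^ j / (real n - real m)) = L ^ j * H - gap"
    unfolding H_def gap_def sum_inverse_reflect[symmetric] sum_distrib_left sum_subtractf[symmetric]
    by (intro sum.cong) (auto simp: diff_divide_distrib)
  moreover have "0 \<le> gap" "gap \<le> real j * L ^ (j - 1) * H"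
    using sum_ln_power_gap_div_bounds[of n j] by (simp_all add: gap_def H_def L_def)
  moreover have "real j * L ^ (j - 1) * H \<le> 5 * real j * L ^ j"
  proof (cases j)
    case (Suc i)
    have "real j * L ^ (j - 1) * H \<le> real j * L ^ i * (L + 2)"
      using H_approx L_half by (simp add: Suc mult_left_mono)
    also have "\<dots> \<le> real j * L ^ i * (5 * L)"
      using L_half by (intro mult_left_mono) auto
    finally show ?thesis by (simp add: Suc algebra_simps)
  qed simp
  moreover have "\<bar>L ^ j * H - L ^ Suc j\<bar> \<le> 2 * L ^ j"
  proof -
    have "L ^ j * H - L ^ Suc j = L ^ j * (H - L)"
      by (simp add: algebra_simps)
    then have "\<bar>L ^ j * H - L ^ Suc j\<bar> = L ^ j * \<bar>H - L\<bar>"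
      using L_half by (simp add: abs_mult)
    then show ?thesis
      using mult_left_mono[OF H_approx, of "L ^ j"] L_half by simp
  qed
  ultimately show ?thesis
    by (simp add: L_def algebra_simps abs_le_iff)
qed

definition ln_weight :: "nat \<Rightarrow> nat \<Rightarrow> nat \<Rightarrow> real" where
  "ln_weight n j i = ln (real i) ^ j / (real i * (real n - real i))"

lemma ln_weight_partial_fractions:
  assumes "i \<in> {1..<n}"
  shows "ln_weight n j i = (ln (real i) ^ j / real i + ln (real i) ^ j / (real n - real i)) / real n"
  using assms by (simp add: ln_weight_def field_simps)

lemma sum_ln_weight_approx:
  assumes n: "2 \<le> n"
  shows "\<bar>(\<Sum>i=1..<n. ln_weight n j i) - (1 / real (Suc j) + 1) * ln (real n) ^ Suc j / real n\<bar>
           \<le> 7 * real (j + 2) * ln (real n) ^ j / real n"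
proof -
  define L where "L = ln (real n)"
  define S1 where "S1 = (\<Sum>i=1..<n. ln (real i) ^ j / real i)"
  define S2 where "S2 = (\<Sum>i=1..<n. ln (real i) ^ j / (real n - real i))"
  have L0: "0 \<le> L" using n by (simp add: L_def)
  have "\<bar>(S1 - L ^ Suc j / real (Suc j)) + (S2 - L ^ Suc j)\<bar> \<le> 2 * L ^ j + 5 * real (Suc j) * L ^ j"
    using sum_ln_power_div_approx[of n j] sum_ln_power_div_complement_approx[OF n, of j] n
    by (simp add: S1_def S2_def L_def)
  also have "\<dots> \<le> 7 * real (j + 2) * L ^ j"
    using L0 by (simp add: algebra_simps)
  finally have "\<bar>(S1 - L ^ Suc j / real (Suc j)) + (S2 - L ^ Suc j)\<bar> / real n
                  \<le> 7 * real (j + 2) * L ^ j / real n"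
    by (simp add: divide_right_mono)
  moreover have "(\<Sum>i=1..<n. ln_weight n j i) = (S1 + S2) / real n"
    unfolding S1_def S2_def sum_divide_distrib sum.distrib[symmetric]
    by (intro sum.cong refl ln_weight_partial_fractions)
  moreover have "(S1 + S2) / real n - (1 / real (Suc j) + 1) * L ^ Suc j / real n
                   = ((S1 - L ^ Suc j / real (Suc j)) + (S2 - L ^ Suc j)) / real n"
    by (simp add: distrib_right add_divide_distrib diff_divide_distrib)
  ultimately show ?thesis
    using n by (simp add: L_def abs_divide)
qed

section \<open>Abel summation and oscillating sums\<close>

lemma abel_summation_remainder_le:
  fixes z :: "nat \<Rightarrow> complex" and b :: "nat \<Rightarrow> real"
  assumes partial: "\<And>y. a \<le> y \<Longrightarrow> y \<le> a + N \<Longrightarrow> cmod (\<Sum>i=a..y. z i) \<le> B"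
  shows "cmod ((\<Sum>i=a..a+N. z i * of_real (b i)) - of_real (b (a+N)) * (\<Sum>i=a..a+N. z i))
           \<le> B * (\<Sum>i=a..<a+N. \<bar>b (Suc i) - b i\<bar>)"
  using partial
proof (induction N)
  case (Suc N)
  define E where "E = (\<Sum>i=a..a+N. z i * of_real (b i))"
  define Q where "Q = (\<Sum>i=a..a+N. z i)"
  have IH: "cmod (E - of_real (b (a+N)) * Q) \<le> B * (\<Sum>i=a..<a+N. \<bar>b (Suc i) - b i\<bar>)"
    using Suc by (simp add: E_def Q_def)
  have "cmod Q \<le> B" unfolding Q_def by (rule Suc.prems) simp_all
  then have step: "cmod (of_real (b (a+N) - b (Suc (a+N))) * Q) \<le> \<bar>b (Suc (a+N)) - b (a+N)\<bar> * B"
    unfolding norm_mult norm_of_real abs_minus_commute[of "b (a+N)"] by (simp add: mult_left_mono)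
  have "(\<Sum>i=a..a+Suc N. z i * of_real (b i)) - of_real (b (a+Suc N)) * (\<Sum>i=a..a+Suc N. z i)
          = (E - of_real (b (a+N)) * Q) + of_real (b (a+N) - b (Suc (a+N))) * Q"
    by (simp add: E_def Q_def algebra_simps)
  also have "cmod \<dots> \<le> cmod (E - of_real (b (a+N)) * Q) + cmod (of_real (b (a+N) - b (Suc (a+N))) * Q)"
    by (rule norm_triangle_ineq)
  also have "\<dots> \<le> B * (\<Sum>i=a..<a+N. \<bar>b (Suc i) - b i\<bar>) + \<bar>b (Suc (a+N)) - b (a+N)\<bar> * B"
    using IH step by (rule add_mono)
  finally show ?case by (simp add: algebra_simps)
qed simp

lemma abel_summation_le:
  fixes z :: "nat \<Rightarrow> complex" and b :: "nat \<Rightarrow> real"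
  assumes partial: "\<And>y. a \<le> y \<Longrightarrow> y \<le> c \<Longrightarrow> cmod (\<Sum>i=a..y. z i) \<le> B" and ac: "a \<le> c"
  shows "cmod (\<Sum>i=a..c. z i * of_real (b i)) \<le> B * ((\<Sum>i=a..<c. \<bar>b (Suc i) - b i\<bar>) + \<bar>b c\<bar>)"
proof -
  define S where "S = (\<Sum>i=a..c. z i * of_real (b i))"
  define Q where "Q = (\<Sum>i=a..c. z i)"
  have "cmod (S - of_real (b c) * Q) \<le> B * (\<Sum>i=a..<c. \<bar>b (Suc i) - b i\<bar>)"
    using abel_summation_remainder_le[of a "c - a" z B b] partial ac by (simp add: S_def Q_def)
  moreover have "cmod (of_real (b c) * Q) \<le> \<bar>b c\<bar> * B"
    using partial[of c] ac by (simp add: Q_def norm_mult mult_left_mono)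
  ultimately show ?thesis
    using norm_triangle_ineq[of "S - of_real (b c) * Q" "of_real (b c) * Q"]
    by (simp add: S_def algebra_simps)
qed

lemma abel_summation_incseq_le:
  fixes z :: "nat \<Rightarrow> complex" and b :: "nat \<Rightarrow> real"
  assumes partial: "\<And>y. a \<le> y \<Longrightarrow> y \<le> c \<Longrightarrow> cmod (\<Sum>i=a..y. z i) \<le> B" and ac: "a \<le> c"
    and mono: "\<And>i. a \<le> i \<Longrightarrow> i < c \<Longrightarrow> b i \<le> b (Suc i)" and nonneg: "0 \<le> b a"
  shows "cmod (\<Sum>i=a..c. z i * of_real (b i)) \<le> 2 * B * b c"
proof -
  have B: "0 \<le> B" using partial[of a] ac by (meson norm_ge_zero order_trans order_refl)
  have "(\<Sum>i=a..<c. \<bar>b (Suc i) - b i\<bar>) = (\<Sum>i=a..<c. b (Suc i) - b i)"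
    using mono by (intro sum.cong) auto
  also have "\<dots> = b c - b a" by (rule sum_Suc_diff'[OF ac])
  finally have "(\<Sum>i=a..<c. \<bar>b (Suc i) - b i\<bar>) + \<bar>b c\<bar> \<le> 2 * b c"
    using nonneg sum_nonneg[of "{a..<c}" "\<lambda>i. \<bar>b (Suc i) - b i\<bar>"] by auto
  then have "cmod (\<Sum>i=a..c. z i * of_real (b i)) \<le> B * (2 * b c)"
    using abel_summation_le[OF partial ac, of b] B by (meson mult_left_mono order_trans)
  then show ?thesis by (simp add: mult_ac)
qed

lemma abel_summation_decseq_le:
  fixes z :: "nat \<Rightarrow> complex" and b :: "nat \<Rightarrow> real"
  assumes partial: "\<And>y. a \<le> y \<Longrightarrow> y \<le> c \<Longrightarrow> cmod (\<Sum>i=a..y. z i) \<le> B" and ac: "a \<le> c"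
    and mono: "\<And>i. a \<le> i \<Longrightarrow> i < c \<Longrightarrow> b (Suc i) \<le> b i" and nonneg: "0 \<le> b c"
  shows "cmod (\<Sum>i=a..c. z i * of_real (b i)) \<le> B * b a"
proof -
  have "(\<Sum>i=a..<c. \<bar>b (Suc i) - b i\<bar>) = - (\<Sum>i=a..<c. b (Suc i) - b i)"
    using mono by (simp add: sum_negf[symmetric])
  also have "\<dots> = b a - b c" using sum_Suc_diff'[OF ac, of b] by simp
  finally show ?thesis
    using abel_summation_le[OF partial ac, of b] nonneg by simp
qed

lemma norm_sum_power_le:
  fixes w :: complex
  assumes "cmod w = 1" and "w \<noteq> 1"
  shows "cmod (\<Sum>i=x..y. w ^ i) \<le> 2 / cmod (1 - w)"
proof (cases "x \<le> y")
  case True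
  have "cmod (1 - w) * cmod (\<Sum>i=x..y. w ^ i) = cmod (w ^ x - w ^ Suc y)"
    by (metis norm_mult sum_gp_multiplied[OF True])
  also have "\<dots> \<le> 2"
    using norm_triangle_ineq4[of "w ^ x" "w ^ Suc y"] assms by (simp add: norm_mult norm_power)
  finally show ?thesis using assms by (simp add: field_simps mult.commute)
qed simp

lemma norm_sum_power_ln_div_le:
  fixes w :: complex
  assumes partial: "\<And>x y. cmod (\<Sum>i=x..y. w ^ i) \<le> B" and N: "1 \<le> N"
  shows "cmod (\<Sum>i=1..N. w ^ i * of_real (ln (real i) ^ j / real i)) \<le> 2 * B * ln (real N) ^ j"
proof -
  have "cmod (\<Sum>i=1..y. w ^ i * of_real (1 / real i)) \<le> B" if "1 \<le> y" for y
    using abel_summation_decseq_le[OF partial that, of "\<lambda>i. 1 / real i"] by (simp add: field_simps)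
  then have "cmod (\<Sum>i=1..N. (w ^ i * of_real (1 / real i)) * of_real (ln (real i) ^ j))
               \<le> 2 * B * ln (real N) ^ j"
    using N by (intro abel_summation_incseq_le) (auto intro: power_mono)
  then show ?thesis by (simp add: mult.assoc)
qed

lemma norm_sum_power_ln_div_complement_le:
  fixes w :: complex
  assumes partial: "\<And>x y. cmod (\<Sum>i=x..y. w ^ i) \<le> B" and n: "2 \<le> n"
  shows "cmod (\<Sum>i=1..n-1. w ^ i * of_real (ln (real i) ^ j / (real n - real i)))
           \<le> 2 * B * ln (real n) ^ j"
proof -
  have B: "0 \<le> B" using partial[of 0 0] by (meson norm_ge_zero order_trans)
  have mono: "ln (real i) ^ j / (real n - real i) \<le> ln (real (Suc i)) ^ j / (real n - real (Suc i))"
    if "1 \<le> i" "i < n - 1" for i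
  proof -
    have "ln (real i) ^ j / (real n - real i) \<le> ln (real (Suc i)) ^ j / (real n - real i)"
      using that by (intro divide_right_mono power_mono) auto
    also have "\<dots> \<le> ln (real (Suc i)) ^ j / (real n - real (Suc i))"
      using that by (intro divide_left_mono) auto
    finally show ?thesis .
  qed
  have "cmod (\<Sum>i=1..n-1. w ^ i * of_real (ln (real i) ^ j / (real n - real i)))
          \<le> 2 * B * (ln (real (n - 1)) ^ j / (real n - real (n - 1)))"
    using n mono by (intro abel_summation_incseq_le[OF partial]) auto
  also have "\<dots> \<le> 2 * B * ln (real n) ^ j"
  proof -
    have "ln (real (n - 1)) ^ j \<le> ln (real n) ^ j" using n by (intro power_mono) auto
    then show ?thesis using n B by (simp add: of_nat_diff mult_left_mono)
  qed
  finally show ?thesis .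
qed

lemma norm_sum_power_ln_weight_le:
  fixes w :: complex
  assumes w: "cmod w = 1" "w \<noteq> 1" and n: "2 \<le> n"
  shows "cmod (\<Sum>i=1..<n. w ^ i * of_real (ln_weight n j i))
           \<le> 8 / cmod (1 - w) * ln (real n) ^ j / real n"
proof -
  define B where "B = 2 / cmod (1 - w)"
  define P1 where "P1 = (\<Sum>i=1..n-1. w ^ i * of_real (ln (real i) ^ j / real i))"
  define P2 where "P2 = (\<Sum>i=1..n-1. w ^ i * of_real (ln (real i) ^ j / (real n - real i)))"
  have partial: "cmod (\<Sum>i=x..y. w ^ i) \<le> B" for x y
    unfolding B_def by (rule norm_sum_power_le[OF w])
  have "cmod P1 \<le> 2 * B * ln (real n) ^ j"
  proof -
    have "cmod P1 \<le> 2 * B * ln (real (n - 1)) ^ j"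
      unfolding P1_def using n by (intro norm_sum_power_ln_div_le[OF partial]) simp
    also have "\<dots> \<le> 2 * B * ln (real n) ^ j"
      using n by (intro mult_left_mono power_mono) (auto simp: B_def)
    finally show ?thesis .
  qed
  moreover have "cmod P2 \<le> 2 * B * ln (real n) ^ j"
    unfolding P2_def by (rule norm_sum_power_ln_div_complement_le[OF partial n])
  moreover have "(\<Sum>i=1..<n. w ^ i * of_real (ln_weight n j i)) = (P1 + P2) / of_real (real n)"
  proof -
    have "{1..<n} = {1..n-1}" using n by auto
    then show ?thesis
      unfolding P1_def P2_def sum_divide_distrib sum.distrib[symmetric]
      by (intro sum.cong) (auto simp: ln_weight_partial_fractions algebra_simps add_divide_distrib)
  qed
  ultimately have "cmod (\<Sum>i=1..<n. w ^ i * of_real (ln_weight n j i))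
                      \<le> (4 * B * ln (real n) ^ j) / real n"
    using norm_triangle_ineq[of P1 P2] n by (simp add: norm_divide divide_right_mono)
  then show ?thesis by (simp add: B_def)
qed

section \<open>Angular separation on a circle\<close>

lemma sin_ge_quarter:
  fixes x :: real
  assumes "0 \<le> x" "x \<le> 2"
  shows "x / 4 \<le> sin x"
proof -
  have "\<bar>sin x - (\<Sum>m<3. sin_coeff m * x ^ m)\<bar> \<le> inverse (fact 3) * \<bar>x\<bar> ^ 3"
    by (rule Maclaurin_sin_bound)
  moreover have "(\<Sum>m<3. sin_coeff m * x ^ m) = x"
    by (simp add: numeral_3_eq_3 sin_coeff_def)
  ultimately have "\<bar>sin x - x\<bar> \<le> x ^ 3 / 6" using assms by (simp add: fact_numeral)
  then have "x - x ^ 3 / 6 \<le> sin x" by linarith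
  moreover have "x ^ 3 / 6 \<le> 3 * x / 4"
  proof -
    have "x ^ 3 = x * x\<^sup>2" by (simp add: power3_eq_cube power2_eq_square)
    also have "\<dots> \<le> x * 4" using assms by (intro mult_left_mono) (auto simp: power2_eq_square intro: mult_mono[of x 2 x 2, simplified])
    finally show ?thesis using assms by linarith
  qed
  ultimately show ?thesis by linarith
qed

lemma norm_one_minus_cis: "cmod (1 - cis \<theta>) = 2 * \<bar>sin (\<theta> / 2)\<bar>"
proof -
  have "(cmod (1 - cis \<theta>))\<^sup>2 = (1 - cos \<theta>)\<^sup>2 + (sin \<theta>)\<^sup>2"
    by (simp add: cmod_power2)
  also have "\<dots> = 2 - 2 * cos \<theta>"
    using sin_cos_squared_add[of \<theta>] by (simp add: power2_eq_square algebra_simps)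
  also have "\<dots> = (2 * \<bar>sin (\<theta> / 2)\<bar>)\<^sup>2"
    using cos_double_sin[of "\<theta> / 2"] by (simp add: power2_eq_square)
  finally show ?thesis
    by (metis abs_ge_zero norm_ge_zero power2_eq_imp_eq zero_le_mult_iff zero_le_numeral)
qed

lemma abs_sin_half_ge:
  fixes \<theta> \<gamma> :: real
  assumes "0 < \<gamma>" and "\<gamma> \<le> \<bar>\<theta>\<bar>" and "\<bar>\<theta>\<bar> \<le> 2 * pi - \<gamma>"
  shows "\<gamma> / 8 \<le> \<bar>sin (\<theta> / 2)\<bar>"
proof -
  define t where "t = \<bar>\<theta>\<bar> / 2"
  have t: "\<gamma> / 2 \<le> t" "t \<le> pi - \<gamma> / 2" using assms by (auto simp: t_def)
  have "\<bar>sin (\<theta> / 2)\<bar> = sin t"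
    using sin_ge_zero[of t] t assms(1) by (cases "0 \<le> \<theta>") (auto simp: t_def)
  moreover have "\<gamma> / 8 \<le> sin t"
  proof (cases "t \<le> pi / 2")
    case True
    then show ?thesis using sin_ge_quarter[of t] t assms(1) pi_less_4 by linarith
  next
    case False
    then show ?thesis using sin_ge_quarter[of "pi - t"] t assms(1) pi_less_4 by simp
  qed
  ultimately show ?thesis by simp
qed

lemma norm_one_minus_divide_ge:
  fixes \<alpha> \<beta> :: complex and \<gamma> :: real
  assumes eq: "cmod \<alpha> = cmod \<beta>" and b0: "\<beta> \<noteq> 0" and g: "0 < \<gamma>"
    and d: "\<gamma> \<le> \<bar>Arg \<alpha> - Arg \<beta>\<bar>" and pa: "\<gamma> \<le> \<bar>pi - Arg \<alpha>\<bar>" and pb: "\<gamma> \<le> \<bar>pi - Arg \<beta>\<bar>"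
  shows "\<gamma> / 4 \<le> cmod (1 - \<alpha> / \<beta>)"
proof -
  have "\<alpha> / \<beta> = rcis (cmod \<alpha>) (Arg \<alpha>) / rcis (cmod \<beta>) (Arg \<beta>)" by (simp add: rcis_cmod_Arg)
  also have "\<dots> = cis (Arg \<alpha> - Arg \<beta>)" using eq b0 by (simp add: rcis_def cis_divide[symmetric])
  finally have quot: "\<alpha> / \<beta> = cis (Arg \<alpha> - Arg \<beta>)" .
  have "\<bar>Arg \<alpha> - Arg \<beta>\<bar> \<le> 2 * pi - \<gamma>"
    using Arg_bounded[of \<alpha>] Arg_bounded[of \<beta>] pa pb by (auto simp: abs_le_iff)
  then show ?thesis
    using abs_sin_half_ge[OF g d] by (simp add: quot norm_one_minus_cis)
qed

section \<open>Convolution of sums over inverse zeros\<close>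

text \<open>\<open>Zsum Z m l n\<close> is \<open>Z\<^sub>l(n, \<chi>)\<close> with the set of inverse zeros and their multiplicities
  as parameters.\<close>

definition Zsum :: "complex set \<Rightarrow> (complex \<Rightarrow> nat) \<Rightarrow> nat \<Rightarrow> nat \<Rightarrow> complex" where
  "Zsum Z m l n = (-1) ^ l / of_nat (fact (l - 1)) *
     (\<Sum>\<alpha>\<in>Z. of_nat (m \<alpha>) ^ l * \<alpha> ^ n * of_real (ln (real n)) ^ (l - 1) / of_nat n)"

definition conv_kernel :: "nat \<Rightarrow> nat \<Rightarrow> complex \<Rightarrow> complex \<Rightarrow> complex" where
  "conv_kernel n j \<alpha> \<beta> = (\<Sum>i=1..<n. \<alpha> ^ i * \<beta> ^ (n - i) * of_real (ln_weight n j i))"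

lemma Zsum_convolution:
  "(\<Sum>i=1..n-1. Zsum Z m (Suc j) i * Zsum Z m 1 (n - i))
     = (-1) ^ j / of_nat (fact j) *
       (\<Sum>\<alpha>\<in>Z. \<Sum>\<beta>\<in>Z. of_nat (m \<alpha>) ^ Suc j * of_nat (m \<beta>) * conv_kernel n j \<alpha> \<beta>)"
proof -
  define a where "a \<alpha> = (of_nat (m \<alpha>) :: complex)" for \<alpha>
  have summand: "Zsum Z m (Suc j) i * Zsum Z m 1 (n - i)
      = (-1) ^ j / of_nat (fact j) *
        (\<Sum>\<alpha>\<in>Z. \<Sum>\<beta>\<in>Z. a \<alpha> ^ Suc j * a \<beta> * (\<alpha> ^ i * \<beta> ^ (n - i) * of_real (ln_weight n j i)))"
    if i: "i \<in> {1..<n}" for i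
  proof -
    have "Zsum Z m (Suc j) i * Zsum Z m 1 (n - i)
        = (-1) ^ j / of_nat (fact j) *
          ((\<Sum>\<alpha>\<in>Z. a \<alpha> ^ Suc j * \<alpha> ^ i * (of_real (ln (real i)) ^ j / of_nat i)) *
           (\<Sum>\<beta>\<in>Z. a \<beta> * \<beta> ^ (n - i) * (1 / of_nat (n - i))))"
      by (simp add: Zsum_def a_def sum_negf sum_divide_distrib[symmetric] mult_ac)
    moreover have "of_real (ln_weight n j i) = (of_real (ln (real i)) ^ j / of_nat i) * (1 / of_nat (n - i) :: complex)"
      using i by (simp add: ln_weight_def of_nat_diff)
    ultimately show ?thesis
      unfolding sum_product by (simp add: mult_ac)
  qed
  define c where "c = ((-1) ^ j / of_nat (fact j) :: complex)"
  have "{1..n-1} = {1..<n}" by auto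
  then have "(\<Sum>i=1..n-1. Zsum Z m (Suc j) i * Zsum Z m 1 (n - i))
      = c * (\<Sum>i=1..<n. \<Sum>\<alpha>\<in>Z. \<Sum>\<beta>\<in>Z.
               a \<alpha> ^ Suc j * a \<beta> * (\<alpha> ^ i * \<beta> ^ (n - i) * of_real (ln_weight n j i)))"
    using summand by (simp add: c_def sum_distrib_left)
  also have "(\<Sum>i=1..<n. \<Sum>\<alpha>\<in>Z. \<Sum>\<beta>\<in>Z.
               a \<alpha> ^ Suc j * a \<beta> * (\<alpha> ^ i * \<beta> ^ (n - i) * of_real (ln_weight n j i)))
      = (\<Sum>\<alpha>\<in>Z. \<Sum>i=1..<n. \<Sum>\<beta>\<in>Z.
               a \<alpha> ^ Suc j * a \<beta> * (\<alpha> ^ i * \<beta> ^ (n - i) * of_real (ln_weight n j i)))"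
    by (rule sum.swap)
  also have "\<dots> = (\<Sum>\<alpha>\<in>Z. \<Sum>\<beta>\<in>Z. a \<alpha> ^ Suc j * a \<beta> * conv_kernel n j \<alpha> \<beta>)"
    unfolding conv_kernel_def sum_distrib_left by (intro sum.cong refl) (rule sum.swap)
  finally show ?thesis by (simp add: a_def c_def)
qed

lemma conv_kernel_diagonal:
  "conv_kernel n j \<alpha> \<alpha> = \<alpha> ^ n * of_real (\<Sum>i=1..<n. ln_weight n j i)"
  unfolding conv_kernel_def of_real_sum sum_distrib_left
  by (intro sum.cong refl) (simp add: power_add[symmetric])

lemma norm_conv_kernel_le:
  fixes \<alpha> \<beta> :: complex and \<gamma> :: real
  assumes "cmod \<alpha> = s" and "cmod \<beta> = s" and "\<alpha> \<noteq> \<beta>" and "0 < \<gamma>"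
    and sep: "\<gamma> / 4 \<le> cmod (1 - \<alpha> / \<beta>)" and n: "2 \<le> n"
  shows "cmod (conv_kernel n j \<alpha> \<beta>) \<le> s ^ n * (32 / \<gamma>) * ln (real n) ^ j / real n"
proof -
  define w where "w = \<alpha> / \<beta>"
  have b0: "\<beta> \<noteq> 0" using assms(1-3) by force
  have w: "cmod w = 1" "w \<noteq> 1"
    using assms b0 by (auto simp: w_def norm_divide)
  have "conv_kernel n j \<alpha> \<beta> = \<beta> ^ n * (\<Sum>i=1..<n. w ^ i * of_real (ln_weight n j i))"
    unfolding conv_kernel_def sum_distrib_left
  proof (intro sum.cong refl)
    fix i assume "i \<in> {1..<n}"
    then have "\<beta> ^ n = \<beta> ^ i * \<beta> ^ (n - i)" by (simp add: power_add[symmetric])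
    then show "\<alpha> ^ i * \<beta> ^ (n - i) * of_real (ln_weight n j i)
                 = \<beta> ^ n * (w ^ i * of_real (ln_weight n j i))"
      using b0 by (simp add: w_def power_divide)
  qed
  then have "cmod (conv_kernel n j \<alpha> \<beta>) = s ^ n * cmod (\<Sum>i=1..<n. w ^ i * of_real (ln_weight n j i))"
    using assms by (simp add: norm_mult norm_power)
  also have "\<dots> \<le> s ^ n * (8 / cmod (1 - w) * ln (real n) ^ j / real n)"
    using norm_sum_power_ln_weight_le[OF w n, of j] assms by (intro mult_left_mono) auto
  also have "\<dots> \<le> s ^ n * (32 / \<gamma> * ln (real n) ^ j / real n)"
  proof -
    have "8 / cmod (1 - w) \<le> 32 / \<gamma>"
      using frac_le[of 8 8 "\<gamma> / 4" "cmod (1 - w)"] sep \<open>0 < \<gamma>\<close> by (simp add: w_def)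
    then show ?thesis
      using n assms by (intro mult_left_mono divide_right_mono mult_right_mono) auto
  qed
  finally show ?thesis by simp
qed

lemma sum_power_le_power_sum:
  fixes m :: "'b \<Rightarrow> nat"
  assumes fin: "finite Z" and mult: "(\<Sum>x\<in>Z. m x) \<le> D"
  shows "(\<Sum>x\<in>Z. real (m x) ^ Suc i) \<le> real D ^ Suc i"
proof -
  have "(\<Sum>x\<in>Z. real (m x) ^ Suc i) \<le> (\<Sum>x\<in>Z. real (m x) * real D ^ i)"
  proof (intro sum_mono)
    fix x assume "x \<in> Z"
    then have "m x \<le> D" using fin mult member_le_sum[of x Z m] by linarith
    then show "real (m x) ^ Suc i \<le> real (m x) * real D ^ i"
      by (simp add: mult_left_mono power_mono)
  qed
  also have "\<dots> \<le> real D * real D ^ i"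
    using mult by (simp add: sum_distrib_right[symmetric] mult_right_mono flip: of_nat_sum)
  finally show ?thesis by simp
qed

lemma sum_diagonal_split:
  assumes "finite A"
  shows "(\<Sum>x\<in>A. \<Sum>y\<in>A. f x y) = (\<Sum>x\<in>A. f x x) + (\<Sum>x\<in>A. \<Sum>y\<in>A - {x}. f x y)"
  using assms by (simp add: sum.distrib[symmetric] sum.remove)

lemma norm_sum_zeros_le:
  fixes Z :: "complex set"
  assumes fin: "finite Z" and modulus: "\<And>\<alpha>. \<alpha> \<in> Z \<Longrightarrow> cmod \<alpha> = s" and "0 \<le> s"
    and mult: "(\<Sum>\<alpha>\<in>Z. m \<alpha>) \<le> D"
  shows "cmod (\<Sum>\<alpha>\<in>Z. of_nat (m \<alpha>) ^ Suc i * \<alpha> ^ n * x) \<le> real D ^ Suc i * (s ^ n * cmod x)"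
proof -
  have "cmod (\<Sum>\<alpha>\<in>Z. of_nat (m \<alpha>) ^ Suc i * \<alpha> ^ n * x)
          \<le> (\<Sum>\<alpha>\<in>Z. real (m \<alpha>) ^ Suc i * (s ^ n * cmod x))"
    using norm_sum[of "\<lambda>\<alpha>. of_nat (m \<alpha>) ^ Suc i * \<alpha> ^ n * x" Z] modulus
    by (simp add: norm_mult norm_power mult.assoc)
  also have "\<dots> \<le> real D ^ Suc i * (s ^ n * cmod x)"
    using sum_power_le_power_sum[OF fin mult, of i] \<open>0 \<le> s\<close>
    by (simp add: sum_distrib_right[symmetric] mult_right_mono)
  finally show ?thesis .
qed

lemma norm_sum_off_diagonal_le:
  fixes Z :: "complex set" and K :: "complex \<Rightarrow> complex \<Rightarrow> complex"
  assumes fin: "finite Z" and mult: "(\<Sum>\<alpha>\<in>Z. m \<alpha>) \<le> D" and "0 \<le> E"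
    and K: "\<And>\<alpha> \<beta>. \<alpha> \<in> Z \<Longrightarrow> \<beta> \<in> Z \<Longrightarrow> \<alpha> \<noteq> \<beta> \<Longrightarrow> cmod (K \<alpha> \<beta>) \<le> E"
  shows "cmod (\<Sum>\<alpha>\<in>Z. \<Sum>\<beta>\<in>Z - {\<alpha>}. of_nat (m \<alpha>) ^ Suc i * of_nat (m \<beta>) * K \<alpha> \<beta>)
           \<le> real D ^ Suc (Suc i) * E"
proof -
  have "cmod (\<Sum>\<alpha>\<in>Z. \<Sum>\<beta>\<in>Z - {\<alpha>}. of_nat (m \<alpha>) ^ Suc i * of_nat (m \<beta>) * K \<alpha> \<beta>)
          \<le> (\<Sum>\<alpha>\<in>Z. \<Sum>\<beta>\<in>Z - {\<alpha>}. real (m \<alpha>) ^ Suc i * real (m \<beta>) * E)"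
    by (rule order_trans[OF norm_sum sum_mono], rule order_trans[OF norm_sum sum_mono])
      (use K in \<open>auto simp: norm_mult norm_power intro!: mult_left_mono\<close>)
  also have "\<dots> \<le> (\<Sum>\<alpha>\<in>Z. \<Sum>\<beta>\<in>Z. real (m \<alpha>) ^ Suc i * real (m \<beta>) * E)"
    using fin \<open>0 \<le> E\<close> by (intro sum_mono sum_mono2) auto
  also have "\<dots> = (\<Sum>\<alpha>\<in>Z. real (m \<alpha>) ^ Suc i) * (\<Sum>\<beta>\<in>Z. real (m \<beta>)) * E"
    by (simp add: sum_distrib_left sum_distrib_right mult_ac)
  also have "\<dots> \<le> real D ^ Suc i * real D * E"
    using sum_power_le_power_sum[OF fin mult, of i] mult \<open>0 \<le> E\<close>
    by (intro mult_right_mono mult_mono) (auto simp: sum_nonneg simp flip: of_nat_sum)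
  finally show ?thesis by (simp add: mult_ac)
qed

lemma Zsum_convolution_decomposition:
  fixes Z :: "complex set"
  assumes fin: "finite Z"
  shows "(\<Sum>i=1..n-1. Zsum Z m (Suc j) i * Zsum Z m 1 (n - i))
           - (-1) ^ j * of_nat (j + 2) / of_nat (fact (Suc j)) *
             (\<Sum>\<alpha>\<in>Z. of_nat (m \<alpha>) ^ (j + 2) * \<alpha> ^ n * of_real (ln (real n)) ^ Suc j / of_nat n)
         = (-1) ^ j / of_nat (fact j) *
           ((\<Sum>\<alpha>\<in>Z. of_nat (m \<alpha>) ^ (j + 2) * \<alpha> ^ n *
               of_real ((\<Sum>i=1..<n. ln_weight n j i)
                        - (1 / real (Suc j) + 1) * ln (real n) ^ Suc j / real n))
            + (\<Sum>\<alpha>\<in>Z. \<Sum>\<beta>\<in>Z - {\<alpha>}. of_nat (m \<alpha>) ^ Suc j * of_nat (m \<beta>) * conv_kernel n j \<alpha> \<beta>))"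
    (is "?conv - ?main = ?c * (?diag + ?off)")
proof -
  have "?conv = ?c * (\<Sum>\<alpha>\<in>Z. \<Sum>\<beta>\<in>Z. of_nat (m \<alpha>) ^ Suc j * of_nat (m \<beta>) * conv_kernel n j \<alpha> \<beta>)"
    by (rule Zsum_convolution)
  also have "\<dots> = ?c * ((\<Sum>\<alpha>\<in>Z. of_nat (m \<alpha>) ^ (j + 2) * \<alpha> ^ n *
                               of_real (\<Sum>i=1..<n. ln_weight n j i)) + ?off)"
    unfolding sum_diagonal_split[OF fin] by (simp add: conv_kernel_diagonal mult_ac)
  finally have "?conv = ?c * ((\<Sum>\<alpha>\<in>Z. of_nat (m \<alpha>) ^ (j + 2) * \<alpha> ^ n *
                               of_real (\<Sum>i=1..<n. ln_weight n j i)) + ?off)" .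
  moreover have "?main = ?c * (\<Sum>\<alpha>\<in>Z. of_nat (m \<alpha>) ^ (j + 2) * \<alpha> ^ n *
                               of_real ((1 / real (Suc j) + 1) * ln (real n) ^ Suc j / real n))"
    by (simp add: sum_distrib_left sum_divide_distrib field_simps)
  ultimately show ?thesis
    by (simp add: algebra_simps sum_subtractf)
qed

lemma inverse_fact_le: "1 / real (fact j) \<le> real (j + 2) / real (fact (Suc j))"
proof -
  have "real (fact (Suc j)) = real (Suc j) * real (fact j)" by (simp add: algebra_simps)
  then have "1 / real (fact j) = real (Suc j) / real (fact (Suc j))" by simp
  also have "\<dots> \<le> real (j + 2) / real (fact (Suc j))" by (intro divide_right_mono) auto
  finally show ?thesis .
qed

lemma Zsum_convolution_approx:
  fixes Z :: "complex set" and m :: "complex \<Rightarrow> nat" and s \<gamma> :: real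
  assumes fin: "finite Z" and modulus: "\<And>\<alpha>. \<alpha> \<in> Z \<Longrightarrow> cmod \<alpha> = s" and s: "0 < s"
    and mult: "(\<Sum>\<alpha>\<in>Z. m \<alpha>) \<le> D" and \<gamma>: "0 < \<gamma>"
    and sep: "\<And>\<alpha> \<beta>. \<alpha> \<in> Z \<Longrightarrow> \<beta> \<in> Z \<Longrightarrow> \<alpha> \<noteq> \<beta> \<Longrightarrow> \<gamma> / 4 \<le> cmod (1 - \<alpha> / \<beta>)"
    and k: "2 \<le> k" and n: "2 \<le> n"
  shows "cmod ((\<Sum>i=1..n-1. Zsum Z m (k - 1) i * Zsum Z m 1 (n - i))
           - (-1) ^ k * of_nat k / of_nat (fact (k - 1)) *
             (\<Sum>\<alpha>\<in>Z. of_nat (m \<alpha>) ^ k * \<alpha> ^ n * of_real (ln (real n)) ^ (k - 1) / of_nat n))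
         \<le> real k / real (fact (k - 1)) *
           (40 * real D ^ k * (real k + 1 / \<gamma>) * s ^ n * ln (real n) ^ (k - 2) / real n)"
proof -
  obtain j where j: "k = Suc (Suc j)" using k by (metis add_2_eq_Suc le_Suc_ex)
  define L where "L = ln (real n)"
  define W where "W = (\<Sum>i=1..<n. ln_weight n j i)"
  define H where "H = (1 / real (Suc j) + 1) * L ^ Suc j / real n"
  define Diag where "Diag = (\<Sum>\<alpha>\<in>Z. of_nat (m \<alpha>) ^ k * \<alpha> ^ n * of_real (W - H))"
  define Off where "Off = (\<Sum>\<alpha>\<in>Z. \<Sum>\<beta>\<in>Z - {\<alpha>}. of_nat (m \<alpha>) ^ Suc j * of_nat (m \<beta>) * conv_kernel n j \<alpha> \<beta>)"
  have L: "0 \<le> L" using n by (simp add: L_def)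
  have "cmod Diag \<le> real D ^ k * (s ^ n * cmod (of_real (W - H) :: complex))"
    unfolding Diag_def j by (rule norm_sum_zeros_le[OF fin modulus less_imp_le[OF s] mult])
  also have "\<dots> \<le> real D ^ k * (s ^ n * (7 * real k * L ^ j / real n))"
    unfolding norm_of_real using sum_ln_weight_approx[OF n, of j] less_imp_le[OF s]
    by (intro mult_left_mono) (simp_all add: W_def H_def L_def j)
  finally have "cmod Diag \<le> real D ^ k * (s ^ n * (7 * real k * L ^ j / real n))" .
  moreover have "cmod Off \<le> real D ^ k * (s ^ n * (32 / \<gamma>) * L ^ j / real n)"
    unfolding Off_def j L_def using \<gamma> s n
    by (intro norm_sum_off_diagonal_le[OF fin mult] norm_conv_kernel_le modulus sep) simp_all
  ultimately have "cmod (Diag + Off) \<le> real D ^ k * (7 * real k + 32 / \<gamma>) * (s ^ n * L ^ j / real n)"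
    using norm_triangle_ineq[of Diag Off] by (simp add: algebra_simps add_divide_distrib)
  also have "\<dots> \<le> real D ^ k * (40 * (real k + 1 / \<gamma>)) * (s ^ n * L ^ j / real n)"
    using \<gamma> s L by (intro mult_right_mono mult_left_mono) (auto simp: field_simps)
  finally have bound: "cmod (Diag + Off) \<le> 40 * real D ^ k * (real k + 1 / \<gamma>) * s ^ n * ln (real n) ^ (k - 2) / real n"
    by (simp add: j L_def mult_ac)
  have c: "cmod ((-1) ^ j / of_nat (fact j) :: complex) \<le> real k / real (fact (k - 1))"
    using inverse_fact_le[of j] by (simp add: j norm_divide norm_power)
  have eq: "(\<Sum>i=1..n-1. Zsum Z m (k - 1) i * Zsum Z m 1 (n - i))
          - (-1) ^ k * of_nat k / of_nat (fact (k - 1)) *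
            (\<Sum>\<alpha>\<in>Z. of_nat (m \<alpha>) ^ k * \<alpha> ^ n * of_real (ln (real n)) ^ (k - 1) / of_nat n)
        = (-1) ^ j / of_nat (fact j) * (Diag + Off)"
    using Zsum_convolution_decomposition[OF fin, where n=n and m=m and j=j]
    by (simp add: Diag_def Off_def W_def H_def L_def j)
  show ?thesis
    unfolding eq norm_mult by (rule mult_mono[OF c bound]) simp_all
qed

section \<open>The coefficients of \<open>L(u, \<chi>)\<close>\<close>

lemma
  assumes "dirichlet_char R M chi" and "a \<in> carrier (poly_ring R)"
  shows dirichlet_char_mult:
      "b \<in> carrier (poly_ring R) \<Longrightarrow> chi (a \<otimes>\<^bsub>poly_ring R\<^esub> b) = chi a * chi b"
    and dirichlet_char_periodic:
      "b \<in> carrier (poly_ring R) \<Longrightarrow> M pdivides\<^bsub>R\<^esub> (a \<ominus>\<^bsub>poly_ring R\<^esub> b) \<Longrightarrow> chi a = chi b"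
    and dirichlet_char_nonzero_iff: "chi a \<noteq> 0 \<longleftrightarrow> pcoprime R a M"
  using assms unfolding dirichlet_char_def by blast+

context
  fixes R :: "'a ring" (structure)
  assumes field: "field R"
begin

interpretation field R by (rule field)

lemma pcoprime_bezout:
  assumes b: "b \<in> carrier (poly_ring R)" and M: "M \<in> carrier (poly_ring R)"
    and coprime: "pcoprime R b M"
  obtains u v where "u \<in> carrier (poly_ring R)" "v \<in> carrier (poly_ring R)"
    "\<one>\<^bsub>poly_ring R\<^esub> = (u \<otimes>\<^bsub>poly_ring R\<^esub> b) \<oplus>\<^bsub>poly_ring R\<^esub> (v \<otimes>\<^bsub>poly_ring R\<^esub> M)"
proof -
  interpret UP: principal_domain "poly_ring R"
    using univ_poly_is_principal[OF carrier_is_subfield] .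
  obtain c where c: "c \<in> carrier (poly_ring R)"
    "PIdl\<^bsub>poly_ring R\<^esub> c = PIdl\<^bsub>poly_ring R\<^esub> b <+>\<^bsub>poly_ring R\<^esub> PIdl\<^bsub>poly_ring R\<^esub> M"
    using UP.exists_gen[OF UP.add_ideals[OF UP.cgenideal_ideal[OF b] UP.cgenideal_ideal[OF M]]] by blast
  then have "c gcdof\<^bsub>poly_ring R\<^esub> b M" using UP.ideal_sum_iff_gcd[OF b M c(1)] by simp
  then have "c pdivides b" "c pdivides M" unfolding isgcd_def pdivides_def by auto
  then have unit: "c \<in> Units (poly_ring R)" using coprime c(1) unfolding pcoprime_def by blast
  have "\<one>\<^bsub>poly_ring R\<^esub> = inv\<^bsub>poly_ring R\<^esub> c \<otimes>\<^bsub>poly_ring R\<^esub> c"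
    by (rule UP.Units_l_inv[OF unit, symmetric])
  then have "\<one>\<^bsub>poly_ring R\<^esub> \<in> PIdl\<^bsub>poly_ring R\<^esub> c"
    using UP.Units_inv_closed[OF unit] unfolding cgenideal_def by blast
  then obtain h k where "h \<in> PIdl\<^bsub>poly_ring R\<^esub> b" "k \<in> PIdl\<^bsub>poly_ring R\<^esub> M"
      "\<one>\<^bsub>poly_ring R\<^esub> = h \<oplus>\<^bsub>poly_ring R\<^esub> k"
    unfolding c(2) set_add_def' by auto
  moreover from this(1,2) obtain u v where "u \<in> carrier (poly_ring R)" "h = u \<otimes>\<^bsub>poly_ring R\<^esub> b"
      "v \<in> carrier (poly_ring R)" "k = v \<otimes>\<^bsub>poly_ring R\<^esub> M"
    unfolding cgenideal_def by blast
  ultimately show thesis using that by simp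
qed

lemma pcoprime_pdivides_mult_cancel:
  assumes b: "b \<in> carrier (poly_ring R)" and M: "M \<in> carrier (poly_ring R)"
    and x: "x \<in> carrier (poly_ring R)"
    and coprime: "pcoprime R b M" and dvd: "M pdivides (b \<otimes>\<^bsub>poly_ring R\<^esub> x)"
  shows "M pdivides x"
proof -
  interpret UP: cring "poly_ring R"
    using univ_poly_is_cring[OF carrier_is_subring] .
  obtain u v where uv: "u \<in> carrier (poly_ring R)" "v \<in> carrier (poly_ring R)"
    "\<one>\<^bsub>poly_ring R\<^esub> = (u \<otimes>\<^bsub>poly_ring R\<^esub> b) \<oplus>\<^bsub>poly_ring R\<^esub> (v \<otimes>\<^bsub>poly_ring R\<^esub> M)"
    using pcoprime_bezout[OF b M coprime] by blast
  obtain y where y: "y \<in> carrier (poly_ring R)" "b \<otimes>\<^bsub>poly_ring R\<^esub> x = M \<otimes>\<^bsub>poly_ring R\<^esub> y"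
    using dvd unfolding pdivides_def factor_def by blast
  have "x = \<one>\<^bsub>poly_ring R\<^esub> \<otimes>\<^bsub>poly_ring R\<^esub> x" using x by simp
  also have "\<dots> = ((u \<otimes>\<^bsub>poly_ring R\<^esub> b) \<oplus>\<^bsub>poly_ring R\<^esub> (v \<otimes>\<^bsub>poly_ring R\<^esub> M)) \<otimes>\<^bsub>poly_ring R\<^esub> x"
    using uv(3) by simp
  also have "\<dots> = (u \<otimes>\<^bsub>poly_ring R\<^esub> (b \<otimes>\<^bsub>poly_ring R\<^esub> x)) \<oplus>\<^bsub>poly_ring R\<^esub> (M \<otimes>\<^bsub>poly_ring R\<^esub> (v \<otimes>\<^bsub>poly_ring R\<^esub> x))"
    using uv(1,2) b M x by algebra
  also have "\<dots> = M \<otimes>\<^bsub>poly_ring R\<^esub> ((u \<otimes>\<^bsub>poly_ring R\<^esub> y) \<oplus>\<^bsub>poly_ring R\<^esub> (v \<otimes>\<^bsub>poly_ring R\<^esub> x))"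
    unfolding y(2) using uv(1,2) y(1) M x by algebra
  finally show ?thesis unfolding pdivides_def factor_def using uv(1,2) y(1) x by blast
qed

definition residue_polys :: "'a list \<Rightarrow> 'a list set" where
  "residue_polys M = {r \<in> carrier (poly_ring R). degree r < degree M}"

lemma finite_polys_degree_le:
  assumes "finite (carrier R)"
  shows "finite {p \<in> carrier (poly_ring R). degree p \<le> N}"
proof (rule finite_subset)
  show "{p \<in> carrier (poly_ring R). degree p \<le> N} \<subseteq> {xs. set xs \<subseteq> carrier R \<and> length xs \<le> N + 1}"
    using polynomial_incl by (fastforce simp: univ_poly_carrier)
  show "finite {xs. set xs \<subseteq> carrier R \<and> length xs \<le> N + 1}"
    using finite_lists_length_le[OF assms] .
qed

lemma finite_residue_polys: "finite (carrier R) \<Longrightarrow> finite (residue_polys M)"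
  by (rule finite_subset[OF _ finite_polys_degree_le[of "degree M"]]) (auto simp: residue_polys_def)

lemma pmod_in_residue_polys:
  assumes a: "a \<in> carrier (poly_ring R)" and M: "M \<in> carrier (poly_ring R)" and d: "degree M \<ge> 1"
  shows "a pmod M \<in> residue_polys M"
proof -
  have "M \<noteq> []" using d by auto
  then have "a pmod M = [] \<or> degree (a pmod M) < degree M"
    using pmod_degree[OF carrier_is_subfield a M] by blast
  moreover have "a pmod M \<in> carrier (poly_ring R)"
    using long_division_closed(2)[OF carrier_is_subfield a M] .
  ultimately show ?thesis using d unfolding residue_polys_def by auto
qed

lemma residue_polys_pmod:
  assumes r: "r \<in> residue_polys M" and M: "M \<in> carrier (poly_ring R)"
  shows "r pmod M = r"
  using pmod_const(2)[OF carrier_is_subfield _ M, of r] r unfolding residue_polys_def by auto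

lemma Nil_in_residue_polys:
  assumes "degree M \<ge> 1"
  shows "[] \<in> residue_polys M"
  using assms unfolding residue_polys_def by (auto simp: univ_poly_carrier[symmetric] polynomial_def)

lemma dirichlet_char_cong:
  assumes chi: "dirichlet_char R M chi" and a: "a \<in> carrier (poly_ring R)" and b: "b \<in> carrier (poly_ring R)"
    and M: "M \<in> carrier (poly_ring R)" and eq: "a pmod M = b pmod M"
  shows "chi a = chi b"
  using same_pmod_iff_pdivides[OF carrier_is_subfield a b M] eq dirichlet_char_periodic[OF chi a b] by simp

lemma dirichlet_char_pmod:
  assumes chi: "dirichlet_char R M chi" and a: "a \<in> carrier (poly_ring R)"
    and M: "M \<in> carrier (poly_ring R)" and d: "degree M \<ge> 1"
  shows "chi (a pmod M) = chi a"
proof (rule dirichlet_char_cong[OF chi _ a M])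
  have "a pmod M \<in> residue_polys M" by (rule pmod_in_residue_polys[OF a M d])
  then show "a pmod M \<in> carrier (poly_ring R)" "(a pmod M) pmod M = a pmod M"
    using residue_polys_pmod[OF _ M] unfolding residue_polys_def by auto
qed

lemma residue_polys_add:
  assumes r: "r \<in> residue_polys M" and s: "s \<in> residue_polys M"
  shows "r \<oplus>\<^bsub>poly_ring R\<^esub> s \<in> residue_polys M"
proof -
  interpret UP: ring "poly_ring R" using univ_poly_is_ring[OF carrier_is_subring] .
  have e: "r \<oplus>\<^bsub>poly_ring R\<^esub> s = poly_add r s" by (simp add: univ_poly_add)
  have dr: "degree r < degree M" "degree s < degree M" using r s unfolding residue_polys_def by auto
  have "degree (r \<oplus>\<^bsub>poly_ring R\<^esub> s) \<le> max (degree r) (degree s)" unfolding e by (rule poly_add_degree)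
  then have "degree (r \<oplus>\<^bsub>poly_ring R\<^esub> s) < degree M" using dr by linarith
  moreover have "r \<oplus>\<^bsub>poly_ring R\<^esub> s \<in> carrier (poly_ring R)" using r s unfolding residue_polys_def by auto
  ultimately show ?thesis unfolding residue_polys_def by blast
qed

lemma degree_a_inv_poly:
  assumes "r \<in> carrier (poly_ring R)"
  shows "degree (\<ominus>\<^bsub>poly_ring R\<^esub> r) = degree r"
  by (simp add: univ_poly_a_inv_def'[OF carrier_is_subring assms])

lemma residue_polys_uminus:
  assumes "r \<in> residue_polys M"
  shows "\<ominus>\<^bsub>poly_ring R\<^esub> r \<in> residue_polys M"
proof -
  interpret UP: ring "poly_ring R" using univ_poly_is_ring[OF carrier_is_subring] .
  show ?thesis using assms degree_a_inv_poly by (simp add: residue_polys_def)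
qed

lemma poly_translate_bij:
  assumes S: "S \<subseteq> carrier (poly_ring R)" and r: "r \<in> carrier (poly_ring R)"
    and closed: "\<And>x. x \<in> S \<Longrightarrow> x \<oplus>\<^bsub>poly_ring R\<^esub> r \<in> S"
      "\<And>x. x \<in> S \<Longrightarrow> x \<oplus>\<^bsub>poly_ring R\<^esub> (\<ominus>\<^bsub>poly_ring R\<^esub> r) \<in> S"
  shows "bij_betw (\<lambda>x. x \<oplus>\<^bsub>poly_ring R\<^esub> r) S S"
proof (rule bij_betw_byWitness[where f'="\<lambda>x. x \<oplus>\<^bsub>poly_ring R\<^esub> (\<ominus>\<^bsub>poly_ring R\<^esub> r)"])
  interpret UP: ring "poly_ring R" using univ_poly_is_ring[OF carrier_is_subring] .
  have "x \<oplus>\<^bsub>poly_ring R\<^esub> r \<oplus>\<^bsub>poly_ring R\<^esub> (\<ominus>\<^bsub>poly_ring R\<^esub> r) = x"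
    "x \<oplus>\<^bsub>poly_ring R\<^esub> (\<ominus>\<^bsub>poly_ring R\<^esub> r) \<oplus>\<^bsub>poly_ring R\<^esub> r = x"
    if "x \<in> carrier (poly_ring R)" for x
    using that r by algebra+
  then show "\<forall>x\<in>S. x \<oplus>\<^bsub>poly_ring R\<^esub> r \<oplus>\<^bsub>poly_ring R\<^esub> (\<ominus>\<^bsub>poly_ring R\<^esub> r) = x"
    "\<forall>x\<in>S. x \<oplus>\<^bsub>poly_ring R\<^esub> (\<ominus>\<^bsub>poly_ring R\<^esub> r) \<oplus>\<^bsub>poly_ring R\<^esub> r = x"
    using S by auto
qed (use closed in auto)

lemma residue_polys_translate_bij:
  assumes "a \<in> residue_polys M"
  shows "bij_betw (\<lambda>r. r \<oplus>\<^bsub>poly_ring R\<^esub> a) (residue_polys M) (residue_polys M)"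
proof (rule poly_translate_bij)
  show "residue_polys M \<subseteq> carrier (poly_ring R)" "a \<in> carrier (poly_ring R)"
    using assms by (auto simp: residue_polys_def)
  show "x \<oplus>\<^bsub>poly_ring R\<^esub> a \<in> residue_polys M"
    "x \<oplus>\<^bsub>poly_ring R\<^esub> (\<ominus>\<^bsub>poly_ring R\<^esub> a) \<in> residue_polys M" if "x \<in> residue_polys M" for x
    using residue_polys_add[OF that] assms residue_polys_uminus[OF assms] by blast+
qed

lemma residue_polys_mult_pmod_bij:
  assumes fin: "finite (carrier R)" and M: "M \<in> carrier (poly_ring R)" and d: "degree M \<ge> 1"
    and b: "b \<in> carrier (poly_ring R)" and coprime: "pcoprime R b M"
  shows "bij_betw (\<lambda>r. (b \<otimes>\<^bsub>poly_ring R\<^esub> r) pmod M) (residue_polys M) (residue_polys M)"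
proof -
  interpret UP: domain "poly_ring R" using univ_poly_is_domain[OF carrier_is_subring] .
  define f where "f = (\<lambda>r. (b \<otimes>\<^bsub>poly_ring R\<^esub> r) pmod M)"
  have "f r \<in> residue_polys M" if "r \<in> residue_polys M" for r
  proof -
    have "r \<in> carrier (poly_ring R)" using that by (simp add: residue_polys_def)
    then show ?thesis unfolding f_def by (intro pmod_in_residue_polys[OF _ M d] UP.m_closed b)
  qed
  then have into: "f ` residue_polys M \<subseteq> residue_polys M" by blast
  have inj: "inj_on f (residue_polys M)"
  proof
    fix r s assume r: "r \<in> residue_polys M" and s: "s \<in> residue_polys M" and eq: "f r = f s"
    have rc: "r \<in> carrier (poly_ring R)" and sc: "s \<in> carrier (poly_ring R)"
      using r s unfolding residue_polys_def by auto
    have "(b \<otimes>\<^bsub>poly_ring R\<^esub> r) \<ominus>\<^bsub>poly_ring R\<^esub> (b \<otimes>\<^bsub>poly_ring R\<^esub> s)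
            = b \<otimes>\<^bsub>poly_ring R\<^esub> (r \<ominus>\<^bsub>poly_ring R\<^esub> s)"
      using b rc sc by algebra
    then have "M pdivides (b \<otimes>\<^bsub>poly_ring R\<^esub> (r \<ominus>\<^bsub>poly_ring R\<^esub> s))"
      using same_pmod_iff_pdivides[OF carrier_is_subfield UP.m_closed[OF b rc] UP.m_closed[OF b sc] M] eq
      by (simp add: f_def)
    then have "M pdivides (r \<ominus>\<^bsub>poly_ring R\<^esub> s)"
      by (rule pcoprime_pdivides_mult_cancel[OF b M UP.minus_closed[OF rc sc] coprime])
    then have "r pmod M = s pmod M"
      using same_pmod_iff_pdivides[OF carrier_is_subfield rc sc M] by simp
    then show "r = s" using residue_polys_pmod[OF r M] residue_polys_pmod[OF s M] by simp
  qed
  moreover have "f ` residue_polys M = residue_polys M"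
    by (rule endo_inj_surj[OF finite_residue_polys[OF fin] into inj])
  ultimately show ?thesis unfolding bij_betw_def f_def by simp
qed

lemma sum_dirichlet_char_residue_polys:
  assumes fin: "finite (carrier R)" and M: "M \<in> carrier (poly_ring R)" and d: "degree M \<ge> 1"
    and chi: "dirichlet_char R M chi" and nontrivial: "nontrivial_char R M chi"
  shows "(\<Sum>r\<in>residue_polys M. chi r) = 0"
proof -
  interpret UP: ring "poly_ring R" using univ_poly_is_ring[OF carrier_is_subring] .
  obtain b where b: "b \<in> carrier (poly_ring R)" "pcoprime R b M" "chi b \<noteq> 1"
    using nontrivial unfolding nontrivial_char_def by blast
  have "(\<Sum>r\<in>residue_polys M. chi r) = (\<Sum>r\<in>residue_polys M. chi ((b \<otimes>\<^bsub>poly_ring R\<^esub> r) pmod M))"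
    using sum.reindex_bij_betw[OF residue_polys_mult_pmod_bij[OF fin M d b(1,2)], of chi] by simp
  also have "\<dots> = chi b * (\<Sum>r\<in>residue_polys M. chi r)"
    unfolding sum_distrib_left
    by (intro sum.cong refl)
      (auto simp: residue_polys_def dirichlet_char_pmod[OF chi _ M d] dirichlet_char_mult[OF chi] b(1))
  finally show ?thesis using b(3) by (simp add: algebra_simps)
qed

lemma monic_polys_add_lower_degree:
  assumes a: "a \<in> monic_polys R n" and r: "r \<in> carrier (poly_ring R)" and dr: "degree r < n"
  shows "a \<oplus>\<^bsub>poly_ring R\<^esub> r \<in> monic_polys R n"
proof -
  interpret UP: ring "poly_ring R" using univ_poly_is_ring[OF carrier_is_subring] .
  have ac: "a \<in> carrier (poly_ring R)" and an: "a \<noteq> []" and al: "lead_coeff a = \<one>" and ad: "degree a = n"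
    using a unfolding monic_polys_def by auto
  have pa: "polynomial (carrier R) a" and pr: "polynomial (carrier R) r"
    using ac r unfolding univ_poly_carrier by auto
  have sa: "set a \<subseteq> carrier R" and sr: "set r \<subseteq> carrier R" using pa pr polynomial_incl by auto
  have e: "a \<oplus>\<^bsub>poly_ring R\<^esub> r = poly_add a r" by (simp add: univ_poly_add)
  have len: "length a \<noteq> length r" using dr ad an by auto
  have l: "length (poly_add a r) = length a"
    using poly_add_length_eq[OF carrier_is_subring pa pr len] len dr ad an by auto
  have ne: "poly_add a r \<noteq> []" using l an by auto
  have dg: "degree (poly_add a r) = n" using l ad by simp
  have "lead_coeff (poly_add a r) = coeff (poly_add a r) (degree (poly_add a r))"
    using lead_coeff_simp[OF ne] by simp
  also have "\<dots> = coeff a n \<oplus> coeff r n" unfolding dg poly_add_coeff[OF sa sr] by simp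
  also have "coeff a n = \<one>" using lead_coeff_simp[OF an] al ad by simp
  also have "coeff r n = \<zero>" using coeff_degree[OF dr] .
  finally have lc: "lead_coeff (poly_add a r) = \<one>" by simp
  have "a \<oplus>\<^bsub>poly_ring R\<^esub> r \<in> carrier (poly_ring R)" using ac r by simp
  then show ?thesis unfolding monic_polys_def using e ne dg lc by simp
qed

lemma finite_monic_polys: "finite (carrier R) \<Longrightarrow> finite (monic_polys R n)"
  by (rule finite_subset[OF _ finite_polys_degree_le[of n]]) (auto simp: monic_polys_def)

lemma monic_polys_translate_bij:
  assumes "r \<in> carrier (poly_ring R)" and "degree r < n"
  shows "bij_betw (\<lambda>a. a \<oplus>\<^bsub>poly_ring R\<^esub> r) (monic_polys R n) (monic_polys R n)"
proof -
  interpret UP: ring "poly_ring R" using univ_poly_is_ring[OF carrier_is_subring] .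
  show ?thesis
    using assms monic_polys_add_lower_degree degree_a_inv_poly[OF assms(1)]
    by (intro poly_translate_bij) (auto simp: monic_polys_def)
qed

lemma sum_dirichlet_char_translate:
  assumes fin: "finite (carrier R)" and M: "M \<in> carrier (poly_ring R)" and d: "degree M \<ge> 1"
    and chi: "dirichlet_char R M chi" and nontrivial: "nontrivial_char R M chi"
    and a: "a \<in> carrier (poly_ring R)"
  shows "(\<Sum>r\<in>residue_polys M. chi (a \<oplus>\<^bsub>poly_ring R\<^esub> r)) = 0"
proof -
  interpret UP: ring "poly_ring R" using univ_poly_is_ring[OF carrier_is_subring] .
  have a0: "a pmod M \<in> residue_polys M" by (rule pmod_in_residue_polys[OF a M d])
  then have a0c: "a pmod M \<in> carrier (poly_ring R)" by (simp add: residue_polys_def)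
  have "chi (a \<oplus>\<^bsub>poly_ring R\<^esub> r) = chi (r \<oplus>\<^bsub>poly_ring R\<^esub> (a pmod M))"
    if r: "r \<in> residue_polys M" for r
  proof -
    have rc: "r \<in> carrier (poly_ring R)" using r by (simp add: residue_polys_def)
    have "(a \<oplus>\<^bsub>poly_ring R\<^esub> r) pmod M = ((a pmod M) \<oplus>\<^bsub>poly_ring R\<^esub> r) pmod M"
      using long_division_add_iff[OF carrier_is_subfield a a0c rc M] residue_polys_pmod[OF a0 M] by simp
    then show ?thesis
      using dirichlet_char_cong[OF chi UP.a_closed[OF a rc] UP.a_closed[OF a0c rc] M] a0c rc
      by (simp add: UP.a_comm)
  qed
  then have "(\<Sum>r\<in>residue_polys M. chi (a \<oplus>\<^bsub>poly_ring R\<^esub> r))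
               = (\<Sum>r\<in>residue_polys M. chi (r \<oplus>\<^bsub>poly_ring R\<^esub> (a pmod M)))"
    by (rule sum.cong[OF refl])
  also have "\<dots> = (\<Sum>r\<in>residue_polys M. chi r)"
    using sum.reindex_bij_betw[OF residue_polys_translate_bij[OF a0]] .
  finally show ?thesis using sum_dirichlet_char_residue_polys[OF fin M d chi nontrivial] by simp
qed

lemma L_coeff_eq_0:
  assumes fin: "finite (carrier R)" and M: "M \<in> carrier (poly_ring R)" and d: "degree M \<ge> 1"
    and chi: "dirichlet_char R M chi" and nontrivial: "nontrivial_char R M chi" and n: "n \<ge> degree M"
  shows "L_coeff R chi n = 0"
proof -
  have shift: "L_coeff R chi n = (\<Sum>a\<in>monic_polys R n. chi (a \<oplus>\<^bsub>poly_ring R\<^esub> r))"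
    if "r \<in> residue_polys M" for r
    using that n sum.reindex_bij_betw[OF monic_polys_translate_bij, of r n chi]
    by (simp add: L_coeff_def residue_polys_def)
  have "of_nat (card (residue_polys M)) * L_coeff R chi n = (\<Sum>r\<in>residue_polys M. L_coeff R chi n)"
    by simp
  also have "\<dots> = (\<Sum>r\<in>residue_polys M. \<Sum>a\<in>monic_polys R n. chi (a \<oplus>\<^bsub>poly_ring R\<^esub> r))"
    using shift by (rule sum.cong[OF refl])
  also have "\<dots> = (\<Sum>a\<in>monic_polys R n. \<Sum>r\<in>residue_polys M. chi (a \<oplus>\<^bsub>poly_ring R\<^esub> r))"
    by (rule sum.swap)
  also have "\<dots> = 0"
    using sum_dirichlet_char_translate[OF fin M d chi nontrivial] by (simp add: monic_polys_def)
  finally show ?thesis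
    using finite_residue_polys[OF fin] Nil_in_residue_polys[OF d] by (auto simp: card_eq_0_iff)
qed

lemma L_coeff_0:
  assumes M: "M \<in> carrier (poly_ring R)" and chi: "dirichlet_char R M chi"
  shows "L_coeff R chi 0 = 1"
proof -
  interpret UP: cring "poly_ring R" using univ_poly_is_cring[OF carrier_is_subring] .
  have one: "\<one>\<^bsub>poly_ring R\<^esub> = [\<one>]" by (simp add: univ_poly_one)
  have mon: "monic_polys R 0 = {[\<one>]}"
  proof
    show "monic_polys R 0 \<subseteq> {[\<one>]}"
    proof
      fix p assume "p \<in> monic_polys R 0"
      then have "p \<noteq> []" "hd p = \<one>" "length p - 1 = 0" unfolding monic_polys_def by auto
      then show "p \<in> {[\<one>]}" by (cases p) auto
    qed
    have "[\<one>] \<in> carrier (poly_ring R)" using UP.one_closed one by simp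
    then show "{[\<one>]} \<subseteq> monic_polys R 0" unfolding monic_polys_def by simp
  qed
  have oc: "\<one>\<^bsub>poly_ring R\<^esub> \<in> carrier (poly_ring R)" by simp
  have "pcoprime R \<one>\<^bsub>poly_ring R\<^esub> M"
    unfolding pcoprime_def pdivides_def using UP.divides_one by blast
  then have "chi \<one>\<^bsub>poly_ring R\<^esub> \<noteq> 0" using dirichlet_char_nonzero_iff[OF chi oc] by simp
  moreover have "chi \<one>\<^bsub>poly_ring R\<^esub> = chi \<one>\<^bsub>poly_ring R\<^esub> * chi \<one>\<^bsub>poly_ring R\<^esub>"
    using dirichlet_char_mult[OF chi oc oc] by simp
  ultimately have "chi \<one>\<^bsub>poly_ring R\<^esub> = 1" by (metis mult_cancel_left1)
  then show ?thesis unfolding L_coeff_def mon one by simp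
qed

end

section \<open>Zeros of \<open>L(u, \<chi>)\<close>\<close>

lemma zorder_poly:
  assumes "p \<noteq> 0"
  shows "zorder (Polynomial.poly p) z = int (Polynomial.order z p)"
proof -
  obtain q where q: "p = [:- z, 1:] ^ Polynomial.order z p * q" "\<not> [:- z, 1:] dvd q"
    using order_decomp[OF assms] by blast
  have "Polynomial.poly q z \<noteq> 0" using q(2) by (simp add: poly_eq_0_iff_dvd)
  then show ?thesis
  proof (intro zorder_eqI[where S=UNIV and g="Polynomial.poly q"])
    show "Polynomial.poly p w = Polynomial.poly q w * (w - z) powi int (Polynomial.order z p)" for w
      by (subst q(1)) (simp add: power_int_of_nat mult.commute)
  qed (auto intro: holomorphic_intros)
qed

lemma polynomial_power_series_zeros:
  fixes c :: "nat \<Rightarrow> complex"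
  assumes c0: "c 0 \<noteq> 0" and cd: "\<And>n. d \<le> n \<Longrightarrow> c n = 0"
  defines "f \<equiv> \<lambda>u. \<Sum>n. c n * u ^ n"
  shows "finite {z. f z = 0}" and "(\<Sum>z | f z = 0. nat (zorder f z)) \<le> d"
proof -
  define P where "P = (\<Sum>i<d. Polynomial.monom (c i) i)"
  have "f u = (\<Sum>n<d. c n * u ^ n)" for u
    unfolding f_def by (rule suminf_finite) (auto simp: cd)
  then have fP: "f = Polynomial.poly P" by (simp add: fun_eq_iff P_def poly_sum poly_monom)
  have coeffP: "Polynomial.coeff P i = (if i < d then c i else 0)" for i
    by (simp add: P_def coeff_sum coeff_monom)
  have P0: "P \<noteq> 0"
    using coeffP[of 0] c0 cd[of 0] by (cases "d = 0") auto
  show "finite {z. f z = 0}" unfolding fP using poly_roots_finite[OF P0] .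
  have "(\<Sum>z | f z = 0. nat (zorder f z)) = (\<Sum>z | Polynomial.poly P z = 0. Polynomial.order z P)"
    unfolding fP by (intro sum.cong) (auto simp: zorder_poly[OF P0])
  also have "\<dots> \<le> Polynomial.degree P" by (rule sum_order_le_degree[OF P0])
  also have "\<dots> \<le> d" by (rule degree_le) (auto simp: coeffP)
  finally show "(\<Sum>z | f z = 0. nat (zorder f z)) \<le> d" .
qed

lemma
  fixes R :: "'a ring"
  assumes "field R" and "finite (carrier R)" and "M \<in> carrier (poly_ring R)" and "1 \<le> degree M"
    and "dirichlet_char R M chi" and "nontrivial_char R M chi"
  shows finite_inv_zeros: "finite (inv_zeros R chi)"
    and sum_zmult_le_degree: "(\<Sum>\<alpha>\<in>inv_zeros R chi. zmult R chi \<alpha>) \<le> degree M"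
proof -
  define N where "N = {z. Lfun R chi z = 0}"
  have Lf: "Lfun R chi = (\<lambda>u. \<Sum>n. L_coeff R chi n * u ^ n)"
    by (simp add: fun_eq_iff Lfun_def)
  have "L_coeff R chi 0 \<noteq> 0" using L_coeff_0[OF assms(1,3,5)] by simp
  note zeros = polynomial_power_series_zeros[where c="L_coeff R chi" and d="degree M", OF this L_coeff_eq_0[OF assms]]
  have fN: "finite N" and mult: "(\<Sum>z\<in>N. nat (zorder (Lfun R chi) z)) \<le> degree M"
    using zeros unfolding N_def Lf by simp_all
  have inj: "inj_on (\<lambda>\<alpha>. 1 / \<alpha>) (inv_zeros R chi)"
    by (rule inj_onI) (simp add: field_simps)
  have sub: "(\<lambda>\<alpha>. 1 / \<alpha>) ` inv_zeros R chi \<subseteq> N"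
    unfolding N_def inv_zeros_def by auto
  show "finite (inv_zeros R chi)"
    using finite_imageD[OF finite_subset[OF sub fN] inj] .
  have "(\<Sum>\<alpha>\<in>inv_zeros R chi. zmult R chi \<alpha>) = (\<Sum>z\<in>(\<lambda>\<alpha>. 1 / \<alpha>) ` inv_zeros R chi. nat (zorder (Lfun R chi) z))"
    by (simp add: sum.reindex[OF inj] zmult_def)
  also have "\<dots> \<le> degree M"
    using sum_mono2[OF fN sub] mult by (meson le_trans zero_le)
  finally show "(\<Sum>\<alpha>\<in>inv_zeros R chi. zmult R chi \<alpha>) \<le> degree M" .
qed

definition angle_gaps :: "complex set \<Rightarrow> real set" where
  "angle_gaps Z = {\<bar>Arg a - Arg b\<bar> | a b. a \<in> Z \<and> b \<in> Z \<and> a \<noteq> b}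
                   \<union> {\<bar>Arg a\<bar> | a. a \<in> Z} \<union> {\<bar>pi - Arg a\<bar> | a. a \<in> Z}"

lemma gamma_chi_eq: "gamma_chi R chi =
  (if angle_gaps (inv_zeros R chi) = {} then 1 else Min (angle_gaps (inv_zeros R chi)))"
  by (simp add: gamma_chi_def angle_gaps_def Let_def)

lemma finite_angle_gaps: "finite Z \<Longrightarrow> finite (angle_gaps Z)"
proof -
  assume fin: "finite Z"
  have "{\<bar>Arg a - Arg b\<bar> | a b. a \<in> Z \<and> b \<in> Z \<and> a \<noteq> b} \<subseteq> {\<bar>Arg a - Arg b\<bar> | a b. a \<in> Z \<and> b \<in> Z}"
    by blast
  moreover have "finite {\<bar>Arg a - Arg b\<bar> | a b. a \<in> Z \<and> b \<in> Z}"
    using finite_image_set2[of "\<lambda>a. a \<in> Z" "\<lambda>b. b \<in> Z" "\<lambda>a b. \<bar>Arg a - Arg b\<bar>"] fin by simp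
  ultimately show ?thesis
    using fin unfolding angle_gaps_def by (auto intro: finite_subset)
qed

lemma angle_gaps_pos:
  assumes modulus: "\<And>\<alpha>. \<alpha> \<in> Z \<Longrightarrow> cmod \<alpha> = s" and nonreal: "\<And>\<alpha>. \<alpha> \<in> Z \<Longrightarrow> Im \<alpha> \<noteq> 0"
    and x: "x \<in> angle_gaps Z"
  shows "0 < x"
proof -
  have Arg: "Arg a \<noteq> 0 \<and> Arg a \<noteq> pi" if "a \<in> Z" for a
    using Arg_eq_0_pi[of a] nonreal[OF that] by (auto simp: complex_is_Real_iff)
  have "Arg a \<noteq> Arg b" if "a \<in> Z" "b \<in> Z" "a \<noteq> b" for a b
    using that modulus rcis_cmod_Arg[of a] rcis_cmod_Arg[of b] by metis
  then show ?thesis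
    using x Arg unfolding angle_gaps_def by fastforce
qed

lemma inv_zeros_modulus: "\<alpha> \<in> inv_zeros R chi \<Longrightarrow> cmod \<alpha> = sqrt (real (fq_card R))"
  and inv_zeros_nonreal: "\<alpha> \<in> inv_zeros R chi \<Longrightarrow> Im \<alpha> \<noteq> 0"
  by (simp_all add: inv_zeros_def)

lemma gamma_chi_pos:
  assumes "finite (inv_zeros R chi)"
  shows "0 < gamma_chi R chi"
proof (cases "angle_gaps (inv_zeros R chi) = {}")
  case False
  then show ?thesis
    using Min_in[OF finite_angle_gaps[OF assms] False]
      angle_gaps_pos[OF inv_zeros_modulus inv_zeros_nonreal]
    by (simp add: gamma_chi_eq)
qed (simp add: gamma_chi_eq)

lemma gamma_chi_separation:
  assumes fin: "finite (inv_zeros R chi)"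
    and \<alpha>: "\<alpha> \<in> inv_zeros R chi" and \<beta>: "\<beta> \<in> inv_zeros R chi" and "\<alpha> \<noteq> \<beta>"
  shows "gamma_chi R chi / 4 \<le> cmod (1 - \<alpha> / \<beta>)"
proof (rule norm_one_minus_divide_ge)
  have gaps: "\<bar>Arg \<alpha> - Arg \<beta>\<bar> \<in> angle_gaps (inv_zeros R chi)"
    "\<bar>pi - Arg \<alpha>\<bar> \<in> angle_gaps (inv_zeros R chi)" "\<bar>pi - Arg \<beta>\<bar> \<in> angle_gaps (inv_zeros R chi)"
    using assms unfolding angle_gaps_def by blast+
  then show "gamma_chi R chi \<le> \<bar>Arg \<alpha> - Arg \<beta>\<bar>" "gamma_chi R chi \<le> \<bar>pi - Arg \<alpha>\<bar>"
    "gamma_chi R chi \<le> \<bar>pi - Arg \<beta>\<bar>"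
    using Min_le[OF finite_angle_gaps[OF fin]] by (auto simp: gamma_chi_eq)
  show "cmod \<alpha> = cmod \<beta>" using \<alpha> \<beta> by (simp add: inv_zeros_modulus)
  show "\<beta> \<noteq> 0" using inv_zeros_nonreal[OF \<beta>] by auto
  show "0 < gamma_chi R chi" using gamma_chi_pos[OF fin] .
qed

lemma Zfun_eq_Zsum: "Zfun R chi = Zsum (inv_zeros R chi) (zmult R chi)"
  by (simp add: fun_eq_iff Zfun_def Zsum_def)

lemma fq_card_pos:
  assumes "field R" and "finite (carrier R)"
  shows "0 < fq_card R"
proof -
  interpret field R by fact
  show ?thesis using assms(2) one_closed unfolding fq_card_def by (auto simp: card_gt_0_iff)
qed

lemma sqrt_power_eq_powr: "0 < q \<Longrightarrow> sqrt q ^ n = q powr (real n / 2)"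
  by (simp add: powr_half_sqrt_powr powr_realpow real_sqrt_power)

theorem lemma5p7:
  "\<exists>C::real. \<forall>(R::'a ring) M chi k n.
     field R \<longrightarrow> finite (carrier R) \<longrightarrow>
     M \<in> carrier (poly_ring R) \<longrightarrow> degree M \<ge> 1 \<longrightarrow>
     dirichlet_char R M chi \<longrightarrow> nontrivial_char R M chi \<longrightarrow>
     k \<ge> 2 \<longrightarrow> n \<ge> 2 \<longrightarrow>
     cmod ((\<Sum>n1 = 1..n - 1. Zfun R chi (k - 1) n1 * Zfun R chi 1 (n - n1))
           - (-1) ^ k * of_nat k / of_nat (fact (k - 1)) *
             (\<Sum>\<alpha> \<in> inv_zeros R chi. of_nat (zmult R chi \<alpha>) ^ k * \<alpha> ^ n *
                of_real (ln (real n)) ^ (k - 1) / of_nat n))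
       \<le> real k / real (fact (k - 1)) *
         (C * real (degree M) ^ k * (real k + 1 / gamma_chi R chi) *
          real (fq_card R) powr (real n / 2) * ln (real n) ^ (k - 2) / real n)"
proof (intro exI[of _ 40] allI impI)
  fix R :: "'a ring" and M chi and k n :: nat
  assume R: "field R" "finite (carrier R)" and M: "M \<in> carrier (poly_ring R)" "1 \<le> degree M"
    and chi: "dirichlet_char R M chi" "nontrivial_char R M chi" and k: "2 \<le> k" and n: "2 \<le> n"
  note fin = finite_inv_zeros[OF R M chi]
  have q: "0 < real (fq_card R)" using fq_card_pos[OF R] by simp
  have "0 < sqrt (real (fq_card R))" using q by simp
  from Zsum_convolution_approx[OF fin inv_zeros_modulus[where R=R and chi=chi] this
      sum_zmult_le_degree[OF R M chi] gamma_chi_pos[OF fin] gamma_chi_separation[OF fin] k n]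
  show "cmod ((\<Sum>n1 = 1..n - 1. Zfun R chi (k - 1) n1 * Zfun R chi 1 (n - n1))
           - (-1) ^ k * of_nat k / of_nat (fact (k - 1)) *
             (\<Sum>\<alpha> \<in> inv_zeros R chi. of_nat (zmult R chi \<alpha>) ^ k * \<alpha> ^ n *
                of_real (ln (real n)) ^ (k - 1) / of_nat n))
       \<le> real k / real (fact (k - 1)) *
         (40 * real (degree M) ^ k * (real k + 1 / gamma_chi R chi) *
          real (fq_card R) powr (real n / 2) * ln (real n) ^ (k - 2) / real n)"
    by (simp add: Zfun_eq_Zsum sqrt_power_eq_powr[OF q])
qed

end
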